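(* Let $n$ and $k\ge2$ be integers with $k$ dividing $n$. Then the deterministic query complexity of the partial function $\mathrm{1vKCycle}$ on $n$ vertices satisfies $D(\mathrm{1vKCycle})\ge\frac{n^2}{128k^2}$.
   Context: Undirected graphs on vertex set $\{1,\dots,n\}$ are encoded as strings in $\{0,1\}^N$ with $N=\binom n2$, one bit per unordered pair indicating whether the edge is present. The partial function $\mathrm{1vKCycle}:\Delta\to\{0,1\}$ is defined on the set $\Delta\subseteq\{0,1\}^N$ of graphs that are either a single cycle of length $n$ (Hamiltonian cycle) or a disjoint union of $k$ cycles each of length $n/k$; it maps the former to $1$ and the latter to $0$. For a partial function $g:\Delta\to\{0,1\}$, $D(g)=\min\{D(f): f:\{0,1\}^N\to\{0,1\},\ f|_\Delta=g\}$, where $D(f)$ for total $f$ is the minimum depth of a deterministic decision tree computing $f$. *)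

theory Defs
  imports Complex_Main
begin

datatype 'i dtree = Leaf bool | Node 'i "'i dtree" "'i dtree"

fun dt_eval :: "'i dtree \<Rightarrow> ('i \<Rightarrow> bool) \<Rightarrow> bool" where
  "dt_eval (Leaf b) x = b"
| "dt_eval (Node i t0 t1) x = (if x i then dt_eval t1 x else dt_eval t0 x)"

fun dt_depth :: "'i dtree \<Rightarrow> nat" where
  "dt_depth (Leaf b) = 0"
| "dt_depth (Node i t0 t1) = Suc (max (dt_depth t0) (dt_depth t1))"

fun dt_vars :: "'i dtree \<Rightarrow> 'i set" where
  "dt_vars (Leaf b) = {}"
| "dt_vars (Node i t0 t1) = insert i (dt_vars t0 \<union> dt_vars t1)"

(* {0,1}^I, the inputs: bit strings indexed by the finite index set I
   (represented as functions that are False outside I) *)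
definition cube :: "'i set \<Rightarrow> ('i \<Rightarrow> bool) set" where
  "cube I = {x. \<forall>e. e \<notin> I \<longrightarrow> \<not> x e}"

definition Dtotal :: "'i set \<Rightarrow> (('i \<Rightarrow> bool) \<Rightarrow> bool) \<Rightarrow> nat" where
  "Dtotal I f = (LEAST d. \<exists>t. dt_vars t \<subseteq> I \<and> dt_depth t = d \<and>
                              (\<forall>x\<in>cube I. dt_eval t x = f x))"

definition Dpartial :: "'i set \<Rightarrow> ('i \<Rightarrow> bool) set \<Rightarrow> (('i \<Rightarrow> bool) \<Rightarrow> bool) \<Rightarrow> nat" where
  "Dpartial I Delta g = (LEAST d. \<exists>f. (\<forall>x\<in>Delta. f x = g x) \<and> Dtotal I f = d)"

(* The N = n choose 2 coordinates: unordered pairs of distinct vertices of {1..n} *)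
definition pairs :: "nat \<Rightarrow> nat set set" where
  "pairs n = {e. e \<subseteq> {1..n} \<and> card e = 2}"

definition cycle_edges :: "nat list \<Rightarrow> nat set set" where
  "cycle_edges vs = {{vs ! i, vs ! ((i + 1) mod length vs)} | i. i < length vs}"

definition union_of_cycles :: "nat \<Rightarrow> nat \<Rightarrow> nat \<Rightarrow> (nat set \<Rightarrow> bool) \<Rightarrow> bool" where
  "union_of_cycles n k L x \<longleftrightarrow> x \<in> cube (pairs n) \<and> 3 \<le> L \<and>
     (\<exists>vss. length vss = k \<and> (\<forall>vs\<in>set vss. length vs = L) \<and>
            distinct (concat vss) \<and> set (concat vss) = {1..n} \<and>
            {e. x e} = (\<Union>vs\<in>set vss. cycle_edges vs))"

definition ham_cycle :: "nat \<Rightarrow> (nat set \<Rightarrow> bool) \<Rightarrow> bool" where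
  "ham_cycle n x \<longleftrightarrow> union_of_cycles n 1 n x"

definition Delta_1vK :: "nat \<Rightarrow> nat \<Rightarrow> (nat set \<Rightarrow> bool) set" where
  "Delta_1vK n k = {x. ham_cycle n x \<or> union_of_cycles n k (n div k) x}"

(* 1vKCycle: 1 on Hamiltonian cycles, 0 on unions of k cycles (only meaningful on Delta) *)
definition one_v_k_cycle :: "nat \<Rightarrow> (nat set \<Rightarrow> bool) \<Rightarrow> bool" where
  "one_v_k_cycle n x = ham_cycle n x"

end

(*
  An adversary argument. Arrange the n = k L vertices in k sheets of L layers, and let a base
  cycle visit the layers in the order 0, m + \<pi> 0, 1, m + \<pi> 1, ..., m - 1, m + \<pi> (m - 1), 2m, ...,
  L - 1 for a permutation \<pi> of m = (L - 1) div 2 elements. Lifting every base edge to k edges that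
  shift the sheet by 1 on the edges l -> m + \<pi> l, by a twist t on the one leaving a hidden layer a,
  and by 0 elsewhere, gives a Hamiltonian cycle when the total shift is 1 mod k and k disjoint
  L-cycles when it is 0; both are reached by choosing t. Unless the queried pair involves the hidden
  cell (a, \<pi> a), an edge query only asks whether \<pi> c = d for one cell. The adversary forbids
  queried cells while their row and column hold fewer than m/4 forbidden cells and commits them
  otherwise. Below L^2/128 queries few cells are committed and the forbidden ones are sparse, so a
  matching argument completes the answers to a permutation with an unexcluded hidden layer, on
  whose two twists the tree behaves identically.
*)

theory Submission
  imports Defs
begin

fun dt_of_list :: "'i list \<Rightarrow> (('i \<Rightarrow> bool) \<Rightarrow> bool) \<Rightarrow> 'i dtree" where
  "dt_of_list [] f = Leaf (f (\<lambda>_. False))"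
| "dt_of_list (i # xs) f =
     Node i (dt_of_list xs (\<lambda>x. f (x(i := False)))) (dt_of_list xs (\<lambda>x. f (x(i := True))))"

lemma dt_eval_dt_of_list: "dt_eval (dt_of_list xs f) x = f (\<lambda>e. e \<in> set xs \<and> x e)"
proof (induction xs arbitrary: f)
  case (Cons i xs)
  have "(\<lambda>e. e \<in> set xs \<and> x e)(i := x i) = (\<lambda>e. e \<in> set (i # xs) \<and> x e)"
    by (rule ext) auto
  then show ?case
    using Cons.IH by (cases "x i") simp_all
qed simp

lemma dt_vars_dt_of_list: "dt_vars (dt_of_list xs f) \<subseteq> set xs"
  by (induction xs arbitrary: f) auto

lemma exists_dt_computing:
  assumes "finite I"
  shows "\<exists>t. dt_vars t \<subseteq> I \<and> (\<forall>x\<in>cube I. dt_eval t x = f x)"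
proof -
  obtain xs where xs: "set xs = I"
    using finite_list[OF assms] by blast
  have "(\<lambda>e. e \<in> set xs \<and> x e) = x" if "x \<in> cube I" for x
    using that xs unfolding cube_def by auto
  then show ?thesis
    using dt_vars_dt_of_list[of xs f] xs by (auto simp: dt_eval_dt_of_list)
qed

lemma Dpartial_witness:
  assumes "finite I"
  obtains t where "dt_vars t \<subseteq> I" "dt_depth t = Dpartial I Delta g"
    "\<forall>x\<in>Delta \<inter> cube I. dt_eval t x = g x"
proof -
  have "\<exists>f. (\<forall>x\<in>Delta. f x = g x) \<and> Dtotal I f = Dpartial I Delta g"
    unfolding Dpartial_def by (rule LeastI_ex) (intro exI[of _ "Dtotal I g"] exI[of _ g], simp)
  then obtain f where f: "\<forall>x\<in>Delta. f x = g x" "Dtotal I f = Dpartial I Delta g"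
    by blast
  obtain t0 where t0: "dt_vars t0 \<subseteq> I" "\<forall>x\<in>cube I. dt_eval t0 x = f x"
    using exists_dt_computing[OF assms(1)] by blast
  have "\<exists>t. dt_vars t \<subseteq> I \<and> dt_depth t = Dtotal I f \<and> (\<forall>x\<in>cube I. dt_eval t x = f x)"
    unfolding Dtotal_def by (rule LeastI_ex) (intro exI[of _ "dt_depth t0"] exI[of _ t0], simp add: t0)
  then show ?thesis
    using that f by auto
qed

lemma finite_pairs: "finite (pairs n)"
  by (rule finite_subset[of _ "Pow {1..n}"]) (auto simp: pairs_def)

section \<open>Cycles\<close>

lemma cycle_edges_subset:
  assumes "e \<in> cycle_edges vs"
  shows "e \<subseteq> set vs"
proof -
  obtain i where "i < length vs" "e = {vs ! i, vs ! ((i + 1) mod length vs)}"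
    using assms unfolding cycle_edges_def by auto
  moreover from this have "(i + 1) mod length vs < length vs"
    by (intro mod_less_divisor) auto
  ultimately show ?thesis
    by auto
qed

lemma cycle_edges_map_upt:
  "cycle_edges (map f [0..<N]) = (\<lambda>i. {f i, f (Suc i mod N)}) ` {..<N}"
proof -
  have "cycle_edges vs = (\<lambda>i. {vs ! i, vs ! (Suc i mod length vs)}) ` {..<length vs}" for vs
    unfolding cycle_edges_def by auto
  then show ?thesis
    by (auto intro!: image_cong)
qed

lemma concat_map_upt_grid:
  assumes "0 < (M::nat)"
  shows "concat (map (\<lambda>c. map (f c) [0..<M]) [0..<K]) = map (\<lambda>i. f (i div M) (i mod M)) [0..<K * M]"
proof (induction K)
  case (Suc K)
  have "[0..<Suc K * M] = [0..<K * M] @ [K * M..<K * M + M]"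
    by (metis add.commute mult_Suc upt_add_eq_append zero_le)
  also have "[K * M..<K * M + M] = map (\<lambda>i. i + K * M) [0..<M]"
    by (simp add: map_add_upt add.commute)
  finally have "[0..<Suc K * M] = [0..<K * M] @ map (\<lambda>i. i + K * M) [0..<M]" .
  moreover have "map (\<lambda>i. f (i div M) (i mod M)) (map (\<lambda>i. i + K * M) [0..<M]) = map (f K) [0..<M]"
    using assms by simp
  ultimately show ?case
    using Suc.IH by simp
qed simp

lemma cycle_inside_one_part:
  assumes "distinct (concat vss)" "W \<in> set vss" "vs \<noteq> []" "vs ! 0 \<in> set W"
    and "cycle_edges vs \<subseteq> (\<Union>ws\<in>set vss. cycle_edges ws)"
  shows "set vs \<subseteq> set W"
proof -
  have "vs ! i \<in> set W" if "i < length vs" for i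
    using that
  proof (induction i)
    case (Suc i)
    have "(i + 1) mod length vs = Suc i"
      using Suc.prems by simp
    then have "{vs ! i, vs ! Suc i} \<in> cycle_edges vs"
      unfolding cycle_edges_def using Suc.prems by force
    then obtain W' where W': "W' \<in> set vss" "{vs ! i, vs ! Suc i} \<subseteq> set W'"
      using assms(5) cycle_edges_subset by blast
    with Suc have "set W' \<inter> set W \<noteq> {}"
      by auto
    then have "W' = W"
      using assms(1,2) W'(1) unfolding distinct_concat_iff by blast
    then show ?case
      using W'(2) by simp
  qed (use assms(4) in simp)
  then show ?thesis
    by (auto simp: in_set_conv_nth)
qed

lemma union_of_cycles_not_ham_cycle:
  assumes "2 \<le> k" "union_of_cycles n k L x"
  shows "\<not> ham_cycle n x"
proof
  assume "ham_cycle n x"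
  then obtain vs where vs: "length vs = n" "set vs = {1..n}" "{e. x e} = cycle_edges vs" "3 \<le> n"
    unfolding ham_cycle_def union_of_cycles_def by (auto simp: length_Suc_conv)
  obtain vss where U: "length vss = k" "\<forall>vs\<in>set vss. length vs = L" "distinct (concat vss)"
    "set (concat vss) = {1..n}" "{e. x e} = (\<Union>vs\<in>set vss. cycle_edges vs)"
    using assms(2) unfolding union_of_cycles_def by blast
  have "vs ! 0 \<in> set (concat vss)"
    using vs(1,2,4) U(4) nth_mem[of 0 vs] by simp
  then obtain W where W: "W \<in> set vss" "vs ! 0 \<in> set W"
    by auto
  have "cycle_edges vs \<subseteq> (\<Union>ws\<in>set vss. cycle_edges ws)" "vs \<noteq> []"
    using vs U(5) by auto
  then have "set vs \<subseteq> set W"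
    using cycle_inside_one_part[OF U(3) W(1) _ W(2)] by blast
  then have "n \<le> L"
    using card_mono[of "set W" "set vs"] card_length[of W] U(2) W(1) vs(1,2) by auto
  moreover have "sum_list (map length vss) = sum_list (map (\<lambda>_. L) vss)"
    using U(2) by (metis map_eq_conv)
  then have "n = k * L"
    using U(1,4) distinct_card[OF U(3)] by (simp add: length_concat sum_list_triv)
  moreover have "2 * L \<le> k * L"
    using assms(1) by simp
  ultimately show False
    using vs(4) by linarith
qed

section \<open>Matchings avoiding a sparse relation\<close>

definition avoiding_inj :: "('a \<times> 'b) set \<Rightarrow> ('a \<Rightarrow> 'b) \<Rightarrow> 'a set \<Rightarrow> 'b set \<Rightarrow> bool" where
  "avoiding_inj F \<mu> A C \<longleftrightarrow> inj_on \<mu> A \<and> \<mu> ` A \<subseteq> C \<and> (\<forall>r\<in>A. (r, \<mu> r) \<notin> F)"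

lemma avoiding_inj_insert:
  assumes "avoiding_inj F \<mu> A C" "r \<notin> A" "c \<in> C - \<mu> ` A" "(r, c) \<notin> F"
  shows "avoiding_inj F (\<mu>(r := c)) (insert r A) C"
proof -
  have "inj_on (\<mu>(r := c)) A" "(\<mu>(r := c)) ` A = \<mu> ` A"
    using assms(1,2) unfolding avoiding_inj_def by (auto simp: inj_on_def)
  then show ?thesis
    using assms unfolding avoiding_inj_def by auto
qed

lemma avoiding_inj_swap:
  assumes "avoiding_inj F \<mu> A C" "r \<notin> A" "c \<in> C - \<mu> ` A"
    and "r0 \<in> A" "(r, \<mu> r0) \<notin> F" "(r0, c) \<notin> F"
  shows "avoiding_inj F (\<mu>(r0 := c, r := \<mu> r0)) (insert r A) C"
proof -
  have inj: "inj_on \<mu> A"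
    using assms(1) unfolding avoiding_inj_def by simp
  have "avoiding_inj F \<mu> (A - {r0}) C"
    using assms(1) unfolding avoiding_inj_def by (auto intro: inj_on_subset)
  then have "avoiding_inj F (\<mu>(r0 := c)) (insert r0 (A - {r0})) C"
    using assms(3,6) by (intro avoiding_inj_insert) auto
  moreover have "\<mu> r0 \<in> C - (\<mu>(r0 := c)) ` A"
    using assms(1,3,4) inj unfolding avoiding_inj_def by (auto dest: inj_onD)
  ultimately show ?thesis
    using assms(2,4,5) avoiding_inj_insert[of F "\<mu>(r0 := c)" A C r "\<mu> r0"] by (simp add: insert_absorb)
qed

lemma inj_on_preimage_meets:
  assumes "inj_on \<mu> A" "finite A" "X \<subseteq> \<mu> ` A" "Y \<subseteq> A" "card A < card X + card Y"
  shows "\<exists>r\<in>Y. \<mu> r \<in> X"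
proof (rule ccontr)
  assume "\<not> (\<exists>r\<in>Y. \<mu> r \<in> X)"
  define S where "S = {r\<in>A. \<mu> r \<in> X}"
  have "\<mu> ` S = X"
    using assms(3) unfolding S_def by blast
  moreover have "inj_on \<mu> S"
    by (rule inj_on_subset[OF assms(1)]) (simp add: S_def)
  ultimately have "card X = card S"
    by (metis card_image)
  moreover have "card S + card Y = card (S \<union> Y)"
    using \<open>\<not> (\<exists>r\<in>Y. \<mu> r \<in> X)\<close> assms(2,4) finite_subset
    by (intro card_Un_disjoint[symmetric]) (auto simp: S_def)
  moreover have "card (S \<union> Y) \<le> card A"
    using assms(2,4) by (intro card_mono) (auto simp: S_def)
  ultimately show False
    using assms(5) by linarith
qed

text \<open>If neither end of a free pair can be matched directly, the \<open>\<ge> M - d\<close> rows matched into the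
  allowed columns of \<open>r\<close> and the \<open>\<ge> M - d\<close> allowed rows of \<open>c\<close> overlap inside the fewer than
  \<open>M \<le> 2 (M - d)\<close> matched rows, which permits a swap.\<close>

lemma avoiding_inj_extend:
  assumes fin: "finite R" "finite C" and card: "card R = M" "card C = M"
    and deg_row: "\<forall>r\<in>R. card {c\<in>C. (r, c) \<in> F} \<le> d"
    and deg_col: "\<forall>c\<in>C. card {r\<in>R. (r, c) \<in> F} \<le> d"
    and "2 * d \<le> M" and \<mu>: "avoiding_inj F \<mu> A C" "A \<subseteq> R" "card A < M"
  shows "\<exists>r \<mu>'. r \<in> R - A \<and> avoiding_inj F \<mu>' (insert r A) C"
proof -
  have inj: "inj_on \<mu> A" and img: "\<mu> ` A \<subseteq> C"
    using \<mu>(1) unfolding avoiding_inj_def by auto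
  have finA: "finite A"
    using \<mu>(2) fin(1) by (rule finite_subset)
  have "A \<noteq> R"
    using \<mu>(3) card(1) by auto
  then obtain r where r: "r \<in> R" "r \<notin> A"
    using \<mu>(2) by auto
  have "\<mu> ` A \<noteq> C"
    using card_image[OF inj] \<mu>(3) card(2) by auto
  then obtain c where c: "c \<in> C" "c \<notin> \<mu> ` A"
    using img by auto
  define Cr where "Cr = {c'\<in>C. (r, c') \<notin> F}"
  define Rc where "Rc = {r'\<in>R. (r', c) \<notin> F}"
  have "Cr = C - {c'\<in>C. (r, c') \<in> F}" "Rc = R - {r'\<in>R. (r', c) \<in> F}"
    unfolding Cr_def Rc_def by auto
  then have card_Cr: "M - d \<le> card Cr" and card_Rc: "M - d \<le> card Rc"
    using fin card deg_row r(1) deg_col c(1) by (auto simp: card_Diff_subset)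
  consider c' where "c' \<in> Cr" "c' \<notin> \<mu> ` A" | r' where "r' \<in> Rc" "r' \<notin> A"
    | "Cr \<subseteq> \<mu> ` A" "Rc \<subseteq> A"
    by blast
  then show ?thesis
  proof cases
    case 1
    then have "avoiding_inj F (\<mu>(r := c')) (insert r A) C"
      using avoiding_inj_insert[OF \<mu>(1) r(2), of c'] unfolding Cr_def by simp
    then show ?thesis
      using r by blast
  next
    case 2
    then have "r' \<in> R" "avoiding_inj F (\<mu>(r' := c)) (insert r' A) C"
      using avoiding_inj_insert[OF \<mu>(1) 2(2), of c] c unfolding Rc_def by simp_all
    then show ?thesis
      using 2(2) by blast
  next
    case 3
    have "card A < card Cr + card Rc"
      using card_Cr card_Rc \<mu>(3) \<open>2 * d \<le> M\<close> by linarith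
    then obtain r0 where "r0 \<in> A" "(r, \<mu> r0) \<notin> F" "(r0, c) \<notin> F"
      using inj_on_preimage_meets[OF inj finA 3] 3(2) unfolding Cr_def Rc_def by blast
    then have "avoiding_inj F (\<mu>(r0 := c, r := \<mu> r0)) (insert r A) C"
      using avoiding_inj_swap[OF \<mu>(1) r(2), of c r0] c by simp
    then show ?thesis
      using r by blast
  qed
qed

lemma avoiding_bij_exists:
  assumes fin: "finite R" "finite C" and card: "card R = M" "card C = M"
    and deg_row: "\<forall>r\<in>R. card {c\<in>C. (r, c) \<in> F} \<le> d"
    and deg_col: "\<forall>c\<in>C. card {r\<in>R. (r, c) \<in> F} \<le> d"
    and "2 * d \<le> M"
  shows "\<exists>\<mu>. bij_betw \<mu> R C \<and> (\<forall>r\<in>R. (r, \<mu> r) \<notin> F)"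
proof -
  have "\<exists>A \<mu>. A \<subseteq> R \<and> card A = K \<and> avoiding_inj F \<mu> A C" if "K \<le> M" for K
    using that
  proof (induction K)
    case 0
    show ?case
      by (intro exI[of _ "{}"]) (simp add: avoiding_inj_def)
  next
    case (Suc K)
    then obtain A \<mu> where A: "A \<subseteq> R" "card A = K" "avoiding_inj F \<mu> A C"
      by auto
    then obtain r \<mu>' where "r \<in> R - A" "avoiding_inj F \<mu>' (insert r A) C"
      using avoiding_inj_extend[OF assms A(3,1)] Suc.prems by auto
    then show ?case
      using A(1,2) finite_subset[OF A(1) fin(1)] by (intro exI[of _ "insert r A"] exI[of _ \<mu>']) auto
  qed
  then obtain A \<mu> where A: "A \<subseteq> R" "card A = M" "avoiding_inj F \<mu> A C"
    by blast
  then have "A = R" "\<mu> ` A = C"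
    using card_subset_eq[OF fin(1) A(1)] card_subset_eq[OF fin(2)] card card_image
    unfolding avoiding_inj_def by auto
  then show ?thesis
    using A(3) unfolding avoiding_inj_def bij_betw_def by auto
qed

section \<open>Row and column loads of a relation\<close>

definition row_load :: "('a \<times> 'b) set \<Rightarrow> 'a \<Rightarrow> nat" where
  "row_load F a = card {j. (a, j) \<in> F}"

definition col_load :: "('a \<times> 'b) set \<Rightarrow> 'b \<Rightarrow> nat" where
  "col_load F j = card {a. (a, j) \<in> F}"

lemma col_load_eq_row_load_converse: "col_load F j = row_load (F\<inverse>) j"
  unfolding row_load_def col_load_def by simp

lemma finite_row: "finite F \<Longrightarrow> finite {j. (a, j) \<in> F}"
  by (rule finite_subset[of _ "snd ` F"]) force+

lemma row_load_insert_other: "a' \<noteq> a \<Longrightarrow> row_load (insert (a', j') F) a = row_load F a"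
  unfolding row_load_def by simp

lemma row_load_insert_same:
  assumes "finite F" "(a, j) \<notin> F"
  shows "row_load (insert (a, j) F) a = Suc (row_load F a)"
proof -
  have "{j'. (a, j') \<in> insert (a, j) F} = insert j {j'. (a, j') \<in> F}"
    by auto
  then show ?thesis
    unfolding row_load_def using finite_row[OF assms(1), of a] assms(2) by simp
qed

lemma row_load_mono: "finite F' \<Longrightarrow> F \<subseteq> F' \<Longrightarrow> row_load F a \<le> row_load F' a"
  unfolding row_load_def using finite_row by (intro card_mono) auto

lemma card_heavy_rows:
  assumes "finite F" "finite A"
  shows "d * card {a\<in>A. d \<le> row_load F a} \<le> card F"
proof -
  define H where "H = {a\<in>A. d \<le> row_load F a}"
  have "finite H"
    using assms(2) unfolding H_def by simp
  have "card H * d \<le> (\<Sum>a\<in>H. row_load F a)"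
    using sum_bounded_below[of H d "row_load F"] unfolding H_def by auto
  also have "\<dots> = card (SIGMA a:H. {j. (a, j) \<in> F})"
    unfolding row_load_def using \<open>finite H\<close> finite_row[OF assms(1)] by simp
  also have "\<dots> \<le> card F"
    using assms(1) by (intro card_mono) auto
  finally show ?thesis
    unfolding H_def by (simp add: mult.commute)
qed

lemma card_heavy_cols:
  assumes "finite F" "finite A"
  shows "d * card {j\<in>A. d \<le> col_load F j} \<le> card F"
  using card_heavy_rows[of "F\<inverse>" A d] assms by (simp add: col_load_eq_row_load_converse card_inverse)

lemma mod_add_complement:
  assumes "s < (k::nat)"
  shows "((s + (k - g mod k)) mod k + g) mod k = s"
proof -
  have "s + (k - g mod k) + g = s + k * (g div k) + k"
    using mult_div_mod_eq[of k g] mod_less_divisor[of k g] assms by linarith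
  then show ?thesis
    using assms by (simp add: mod_add_left_eq)
qed

lemma le_add_two_of_mult_less_square:
  fixes d C :: nat
  assumes "1 \<le> d" "d * C < (d + 1)\<^sup>2"
  shows "C \<le> d + 2"
proof -
  have "d * C \<le> d * (d + 2)"
    using assms(2) by (simp add: power2_eq_square algebra_simps)
  then have "0 < d \<longrightarrow> C \<le> d + 2"
    by (simp only: mult_le_cancel1)
  with assms(1) show ?thesis
    by simp
qed

lemma completion_room_quarter:
  fixes m d q C :: nat
  assumes "1 \<le> d" and m: "4 * d \<le> m" "m \<le> 4 * d + 3"
    and q: "32 * q < (m + 1)\<^sup>2" and C: "C \<le> q" "d * C \<le> 2 * q"
  shows "C + 1 + 2 * d \<le> m \<and> 2 * q < (m - C)\<^sup>2"
proof -
  have "(m + 1)\<^sup>2 \<le> (4 * (d + 1))\<^sup>2"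
    using m by (intro power_mono) auto
  also have "\<dots> = 16 * (d + 1)\<^sup>2"
    by (simp only: power_mult_distrib) simp
  finally have q': "2 * q < (d + 1)\<^sup>2"
    using q by linarith
  then have "C \<le> d + 2"
    using assms(1) C(2) by (intro le_add_two_of_mult_less_square) simp_all
  have "C + 1 + 2 * d \<le> m"
  proof (cases "3 \<le> d")
    case False
    with assms(1) consider "d = 1" | "d = 2"
      by linarith
    then show ?thesis
    proof cases
      case 1
      then have "(m + 1)\<^sup>2 \<le> 8\<^sup>2"
        using m by (intro power_mono) auto
      then show ?thesis
        using q C(1) m 1 by simp
    next
      case 2
      then have "(m + 1)\<^sup>2 \<le> 9\<^sup>2 \<or> 9 \<le> m"
        using m by (cases "m = 8") auto
      then show ?thesis
        using q C(1) m 2 \<open>C \<le> d + 2\<close> by auto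
    qed
  qed (use m \<open>C \<le> d + 2\<close> in linarith)
  moreover from this have "(d + 1)\<^sup>2 \<le> (m - C)\<^sup>2"
    by (intro power_mono) auto
  ultimately show ?thesis
    using q' by linarith
qed

text \<open>The room the adversary needs after \<open>q\<close> queries with \<open>C\<close> committed cells, for cap \<open>m div 4\<close>
  and fewer than \<open>L\<^sup>2 / 128\<close> queries.\<close>

lemma completion_room:
  fixes m L q C :: nat
  assumes "1 \<le> m" "L \<le> 2 * m + 2" "128 * q < L\<^sup>2" and C: "C \<le> q" "m div 4 * C \<le> 2 * q"
  shows "C + 1 + 2 * (m div 4) \<le> m \<and> 2 * q < (m - C)\<^sup>2"
proof -
  have "L\<^sup>2 \<le> (2 * m + 2)\<^sup>2"
    using assms(2) by (rule power_mono) simp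
  then have q: "32 * q < (m + 1)\<^sup>2"
    using assms(3) by (simp add: power2_eq_square algebra_simps)
  show ?thesis
  proof (cases "m div 4 = 0")
    case True
    then have "(m + 1)\<^sup>2 \<le> 4\<^sup>2"
      by (intro power_mono) auto
    then have "q = 0" "C = 0"
      using q C(1) by simp_all
    then show ?thesis
      using True assms(1) by simp
  next
    case False
    then show ?thesis
      using completion_room_quarter[OF _ _ _ q C] by simp
  qed
qed

section \<open>Cyclic covers of a layered cycle\<close>

text \<open>\<open>vertex s l\<close> is the copy in sheet \<open>s < k\<close> of layer \<open>l < L\<close>; \<open>layer \<pi> p\<close> is the layer
  visited at step \<open>p\<close> of the base cycle, and \<open>voltage a t p\<close> is the sheet shift of its \<open>p\<close>-th edge
  (a voltage assignment in \<open>\<int>/k\<close>).\<close>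

locale cyclic_cover =
  fixes k L m :: nat
  assumes two_le_k: "2 \<le> k" and one_le_m: "1 \<le> m"
    and L_lower: "2 * m < L" and L_upper: "L \<le> 2 * m + 2"
begin

lemma k_pos: "0 < k"
  using two_le_k by simp

lemma three_le_L: "3 \<le> L"
  using L_lower one_le_m by simp

lemma L_pos: "0 < L"
  using three_le_L by simp

definition is_perm :: "(nat \<Rightarrow> nat) \<Rightarrow> bool" where
  "is_perm \<pi> \<longleftrightarrow> bij_betw \<pi> {..<m} {..<m}"

definition layer :: "(nat \<Rightarrow> nat) \<Rightarrow> nat \<Rightarrow> nat" where
  "layer \<pi> p = (if p < 2 * m then if even p then p div 2 else m + \<pi> (p div 2) else p)"

definition voltage :: "nat \<Rightarrow> nat \<Rightarrow> nat \<Rightarrow> nat" where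
  "voltage a t p = (if p < 2 * m \<and> even p then if p div 2 = a then t else 1 else 0)"

definition vertex :: "nat \<Rightarrow> nat \<Rightarrow> nat" where
  "vertex s l = Suc (s + k * l)"

definition lift :: "(nat \<Rightarrow> nat) \<Rightarrow> nat \<Rightarrow> nat \<Rightarrow> nat set set" where
  "lift \<pi> a t = {e. \<exists>s<k. \<exists>p<L.
     e = {vertex s (layer \<pi> p), vertex ((s + voltage a t p) mod k) (layer \<pi> (Suc p mod L))}}"

lemma vertex_eq_iff:
  assumes "s < k" "s' < k"
  shows "vertex s l = vertex s' l' \<longleftrightarrow> s = s' \<and> l = l'"
proof
  assume eq: "vertex s l = vertex s' l'"
  then have "(s + k * l) mod k = (s' + k * l') mod k"
    unfolding vertex_def by simp
  then have "s = s'"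
    using assms by simp
  then show "s = s' \<and> l = l'"
    using eq k_pos unfolding vertex_def by simp
qed simp

lemma vertex_in_range:
  assumes "s < k" "l < L"
  shows "vertex s l \<in> {1..k * L}"
proof -
  have "s + k * l < k * Suc l"
    using assms(1) by simp
  also have "\<dots> \<le> k * L"
    using assms(2) by (intro mult_le_mono2) simp
  finally show ?thesis
    unfolding vertex_def by simp
qed

lemma vertex_cases:
  assumes "u \<in> {1..k * L}"
  obtains s l where "s < k" "l < L" "u = vertex s l"
proof
  show "(u - 1) mod k < k"
    using k_pos by simp
  have "u - 1 < L * k"
    using assms by (simp add: mult.commute) linarith
  then show "(u - 1) div k < L"
    using k_pos by (simp add: div_less_iff_less_mult)
  show "u = vertex ((u - 1) mod k) ((u - 1) div k)"
    using assms unfolding vertex_def by simp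
qed

lemma is_perm_less: "is_perm \<pi> \<Longrightarrow> i < m \<Longrightarrow> \<pi> i < m"
  unfolding is_perm_def bij_betw_def by auto

lemma layer_less:
  assumes "is_perm \<pi>" "p < L"
  shows "layer \<pi> p < L"
proof (cases "p < 2 * m")
  case True
  then have "p div 2 < m" "\<pi> (p div 2) < m"
    using is_perm_less[OF assms(1)] by simp_all
  then show ?thesis
    using True L_lower unfolding layer_def by simp
qed (use assms(2) in \<open>simp add: layer_def\<close>)

lemma layer_surj:
  assumes "is_perm \<pi>" "l < L"
  obtains p where "p < L" "layer \<pi> p = l"
proof -
  consider "l < m" | "m \<le> l" "l < 2 * m" | "2 * m \<le> l"
    by linarith
  then show ?thesis
  proof cases
    case 1
    then show ?thesis
      using L_lower that[of "2 * l"] unfolding layer_def by simp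
  next
    case 2
    then have "l - m \<in> \<pi> ` {..<m}"
      using assms(1) unfolding is_perm_def bij_betw_def by auto
    then obtain i where "i < m" "\<pi> i = l - m"
      by auto
    then show ?thesis
      using 2 L_lower that[of "2 * i + 1"] unfolding layer_def by simp
  next
    case 3
    then show ?thesis
      using assms(2) that[of l] unfolding layer_def by simp
  qed
qed

lemma layer_image:
  assumes "is_perm \<pi>"
  shows "layer \<pi> ` {..<L} = {..<L}"
proof
  show "layer \<pi> ` {..<L} \<subseteq> {..<L}"
    using layer_less[OF assms] by auto
  show "{..<L} \<subseteq> layer \<pi> ` {..<L}"
  proof
    fix l
    assume "l \<in> {..<L}"
    then obtain p where "p < L" "layer \<pi> p = l"
      using layer_surj[OF assms] by blast
    then show "l \<in> layer \<pi> ` {..<L}"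
      by force
  qed
qed

lemma layer_inj: "is_perm \<pi> \<Longrightarrow> inj_on (layer \<pi>) {..<L}"
  by (simp add: eq_card_imp_inj_on layer_image)

lemma layer_zero: "layer \<pi> 0 = 0"
  using one_le_m unfolding layer_def by simp

lemma layer_Suc_neq:
  assumes "is_perm \<pi>" "p < L"
  shows "layer \<pi> p \<noteq> layer \<pi> (Suc p mod L)"
proof -
  have "p \<noteq> Suc p mod L"
  proof (cases "Suc p < L")
    case False
    then have "Suc p = L"
      using assms(2) by simp
    then show ?thesis
      using three_le_L by auto
  qed simp
  then show ?thesis
    using inj_onD[OF layer_inj[OF assms(1)]] assms(2) L_pos by auto
qed

lemma lift_subset_pairs:
  assumes "is_perm \<pi>"
  shows "lift \<pi> a t \<subseteq> pairs (k * L)"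
proof
  fix e
  assume "e \<in> lift \<pi> a t"
  then obtain s p where sp: "s < k" "p < L"
    "e = {vertex s (layer \<pi> p), vertex ((s + voltage a t p) mod k) (layer \<pi> (Suc p mod L))}"
    unfolding lift_def by auto
  have s': "(s + voltage a t p) mod k < k" and "Suc p mod L < L"
    using k_pos L_pos by simp_all
  then have "vertex s (layer \<pi> p) \<in> {1..k * L}"
    "vertex ((s + voltage a t p) mod k) (layer \<pi> (Suc p mod L)) \<in> {1..k * L}"
    using sp(1,2) vertex_in_range layer_less[OF assms] by simp_all
  moreover have "vertex s (layer \<pi> p) \<noteq> vertex ((s + voltage a t p) mod k) (layer \<pi> (Suc p mod L))"
    using vertex_eq_iff[OF sp(1) s'] layer_Suc_neq[OF assms sp(2)] by simp
  ultimately show "e \<in> pairs (k * L)"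
    unfolding pairs_def sp(3) by simp
qed

lemma lift_in_cube: "is_perm \<pi> \<Longrightarrow> (\<lambda>e. e \<in> lift \<pi> a t) \<in> cube (pairs (k * L))"
  using lift_subset_pairs unfolding cube_def by auto

definition voltage_sum :: "nat \<Rightarrow> nat \<Rightarrow> nat \<Rightarrow> nat" where
  "voltage_sum a t p = (\<Sum>q<p. voltage a t q)"

definition cover_vertex :: "(nat \<Rightarrow> nat) \<Rightarrow> nat \<Rightarrow> nat \<Rightarrow> nat \<Rightarrow> nat \<Rightarrow> nat" where
  "cover_vertex \<pi> a t c p = vertex ((c + voltage_sum a t p) mod k) (layer \<pi> p)"

definition cover_walk :: "(nat \<Rightarrow> nat) \<Rightarrow> nat \<Rightarrow> nat \<Rightarrow> nat \<Rightarrow> nat" where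
  "cover_walk \<pi> a t i = cover_vertex \<pi> a t (i div L) (i mod L)"

lemma lift_eq_cover_edges:
  "lift \<pi> a t = {{cover_vertex \<pi> a t c p,
      vertex ((c + voltage_sum a t (Suc p)) mod k) (layer \<pi> (Suc p mod L))} | c p. c < k \<and> p < L}"
    (is "_ = ?E")
proof -
  have step: "((c + voltage_sum a t p) mod k + voltage a t p) mod k = (c + voltage_sum a t (Suc p)) mod k"
    for c p
    unfolding voltage_sum_def by (simp add: mod_add_left_eq add.assoc)
  show ?thesis
  proof
    show "lift \<pi> a t \<subseteq> ?E"
    proof
      fix e
      assume "e \<in> lift \<pi> a t"
      then obtain s p where sp: "s < k" "p < L"
        "e = {vertex s (layer \<pi> p), vertex ((s + voltage a t p) mod k) (layer \<pi> (Suc p mod L))}"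
        unfolding lift_def by auto
      define c where "c = (s + (k - voltage_sum a t p mod k)) mod k"
      have "(c + voltage_sum a t p) mod k = s"
        unfolding c_def using mod_add_complement[OF sp(1)] .
      then have "e = {cover_vertex \<pi> a t c p,
          vertex ((c + voltage_sum a t (Suc p)) mod k) (layer \<pi> (Suc p mod L))}"
        using sp(3) step[of c p] unfolding cover_vertex_def by simp
      moreover have "c < k"
        unfolding c_def using k_pos by simp
      ultimately show "e \<in> ?E"
        using sp(2) by blast
    qed
    show "?E \<subseteq> lift \<pi> a t"
    proof
      fix e
      assume "e \<in> ?E"
      then obtain c p where "c < k" "p < L" "e = {cover_vertex \<pi> a t c p,
          vertex ((c + voltage_sum a t (Suc p)) mod k) (layer \<pi> (Suc p mod L))}"
        by blast
      moreover have "(c + voltage_sum a t p) mod k < k"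
        using k_pos by simp
      ultimately show "e \<in> lift \<pi> a t"
        unfolding lift_def cover_vertex_def step[symmetric] by blast
    qed
  qed
qed

lemma voltage_sum_zero: "voltage_sum a t 0 = 0"
  unfolding voltage_sum_def by simp

lemma cover_walk_Suc:
  assumes "voltage_sum a t L mod k = 1" "p < L"
  shows "cover_walk \<pi> a t (Suc (c * L + p)) =
    vertex ((c + voltage_sum a t (Suc p)) mod k) (layer \<pi> (Suc p mod L))"
proof (cases "Suc p < L")
  case True
  then have "Suc (c * L + p) div L = c" "Suc (c * L + p) mod L = Suc p"
    by (simp_all add: add_Suc_right[symmetric] del: add_Suc_right)
  with True show ?thesis
    unfolding cover_walk_def cover_vertex_def by simp
next
  case False
  then have "Suc p = L"
    using assms(2) by simp
  moreover have "(c + voltage_sum a t L) mod k = Suc c mod k"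
    using assms(1) mod_add_right_eq[of c "voltage_sum a t L" k] by simp
  moreover have "Suc (c * L + p) div L = Suc c" "Suc (c * L + p) mod L = 0"
  proof -
    have eq: "Suc (c * L + p) = Suc c * L"
      using \<open>Suc p = L\<close> by simp
    show "Suc (c * L + p) div L = Suc c" "Suc (c * L + p) mod L = 0"
      unfolding eq using L_pos by simp_all
  qed
  ultimately show ?thesis
    unfolding cover_walk_def cover_vertex_def using L_pos by (simp add: voltage_sum_zero layer_zero)
qed

lemma grid_index_less:
  assumes "c < k" "p < L"
  shows "c * L + p < k * L"
proof -
  have "c * L + p < Suc c * L"
    using assms(2) by simp
  also have "\<dots> \<le> k * L"
    using assms(1) by (intro mult_le_mono1) simp
  finally show ?thesis .
qed

lemma cover_walk_less:
  assumes "p < L"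
  shows "cover_walk \<pi> a t (c * L + p) = cover_vertex \<pi> a t c p"
  using assms unfolding cover_walk_def by simp

lemma cover_walk_image:
  assumes "is_perm \<pi>"
  shows "cover_walk \<pi> a t ` {..<k * L} = {1..k * L}"
proof
  show "cover_walk \<pi> a t ` {..<k * L} \<subseteq> {1..k * L}"
    unfolding cover_walk_def cover_vertex_def
    using vertex_in_range layer_less[OF assms] k_pos L_pos by auto
  show "{1..k * L} \<subseteq> cover_walk \<pi> a t ` {..<k * L}"
  proof
    fix u
    assume "u \<in> {1..k * L}"
    then obtain s l where sl: "s < k" "l < L" "u = vertex s l"
      by (rule vertex_cases)
    obtain p where p: "p < L" "layer \<pi> p = l"
      using layer_surj[OF assms sl(2)] by blast
    define c where "c = (s + (k - voltage_sum a t p mod k)) mod k"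
    have "c < k"
      unfolding c_def using k_pos by simp
    then have "c * L + p < k * L"
      using p(1) by (rule grid_index_less)
    moreover have "cover_walk \<pi> a t (c * L + p) = u"
      unfolding cover_walk_less[OF p(1)] cover_vertex_def c_def
      using mod_add_complement[OF sl(1)] p(2) sl(3) by simp
    ultimately show "u \<in> cover_walk \<pi> a t ` {..<k * L}"
      by force
  qed
qed

lemma cover_walk_inj: "is_perm \<pi> \<Longrightarrow> inj_on (cover_walk \<pi> a t) {..<k * L}"
  by (rule eq_card_imp_inj_on) (simp_all add: cover_walk_image)

lemma lift_eq_cover_walk_edges:
  assumes "voltage_sum a t L mod k = 1"
  shows "lift \<pi> a t = (\<lambda>i. {cover_walk \<pi> a t i, cover_walk \<pi> a t (Suc i)}) ` {..<k * L}"
proof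
  show "lift \<pi> a t \<subseteq> (\<lambda>i. {cover_walk \<pi> a t i, cover_walk \<pi> a t (Suc i)}) ` {..<k * L}"
  proof
    fix e
    assume "e \<in> lift \<pi> a t"
    then obtain c p where cp: "c < k" "p < L" and e: "e = {cover_vertex \<pi> a t c p,
        vertex ((c + voltage_sum a t (Suc p)) mod k) (layer \<pi> (Suc p mod L))}"
      unfolding lift_eq_cover_edges by blast
    then have "e = {cover_walk \<pi> a t (c * L + p), cover_walk \<pi> a t (Suc (c * L + p))}"
      using cover_walk_less[OF cp(2)] cover_walk_Suc[OF assms cp(2)] by simp
    then show "e \<in> (\<lambda>i. {cover_walk \<pi> a t i, cover_walk \<pi> a t (Suc i)}) ` {..<k * L}"
      using grid_index_less[OF cp] by blast
  qed
  show "(\<lambda>i. {cover_walk \<pi> a t i, cover_walk \<pi> a t (Suc i)}) ` {..<k * L} \<subseteq> lift \<pi> a t"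
  proof
    fix e
    assume "e \<in> (\<lambda>i. {cover_walk \<pi> a t i, cover_walk \<pi> a t (Suc i)}) ` {..<k * L}"
    then obtain i where i: "i < k * L" "e = {cover_walk \<pi> a t i, cover_walk \<pi> a t (Suc i)}"
      by blast
    define c where "c = i div L"
    define p where "p = i mod L"
    have cp: "c < k" "p < L" and i_eq: "i = c * L + p"
      unfolding c_def p_def using i(1) L_pos by (simp_all add: div_less_iff_less_mult)
    have "e = {cover_vertex \<pi> a t c p,
        vertex ((c + voltage_sum a t (Suc p)) mod k) (layer \<pi> (Suc p mod L))}"
      unfolding i(2) i_eq using cover_walk_less[OF cp(2)] cover_walk_Suc[OF assms cp(2)] by simp
    then show "e \<in> lift \<pi> a t"
      unfolding lift_eq_cover_edges using cp by blast
  qed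
qed

lemma ham_cycle_lift:
  assumes "is_perm \<pi>" "voltage_sum a t L mod k = 1"
  shows "ham_cycle (k * L) (\<lambda>e. e \<in> lift \<pi> a t)"
proof -
  let ?w = "cover_walk \<pi> a t"
  have "?w (Suc i mod (k * L)) = ?w (Suc i)" if "i < k * L" for i
  proof (cases "Suc i < k * L")
    case False
    then have "Suc i = k * L"
      using that by simp
    then show ?thesis
      unfolding cover_walk_def cover_vertex_def using L_pos by (simp add: voltage_sum_zero)
  qed simp
  then have "lift \<pi> a t = cycle_edges (map ?w [0..<k * L])"
    unfolding cycle_edges_map_upt lift_eq_cover_walk_edges[OF assms(2)] by (auto intro!: image_cong)
  moreover have "distinct (map ?w [0..<k * L])" "set (map ?w [0..<k * L]) = {1..k * L}"
    using cover_walk_inj[OF assms(1)] cover_walk_image[OF assms(1)]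
    by (simp_all add: distinct_map lessThan_atLeast0)
  moreover have "3 \<le> k * L"
    using three_le_L two_le_k mult_le_mono[of 1 k 3 L] by simp
  ultimately show ?thesis
    unfolding ham_cycle_def union_of_cycles_def using lift_in_cube[OF assms(1), of a t]
    by (intro conjI exI[of _ "[map ?w [0..<k * L]]"]) auto
qed

lemma lift_eq_sheet_cycle_edges:
  assumes "voltage_sum a t L mod k = 0"
  shows "lift \<pi> a t = (\<Union>c<k. cycle_edges (map (cover_vertex \<pi> a t c) [0..<L]))"
proof -
  have next_eq: "vertex ((c + voltage_sum a t (Suc p)) mod k) (layer \<pi> (Suc p mod L)) =
      cover_vertex \<pi> a t c (Suc p mod L)" if "c < k" "p < L" for c p
  proof (cases "Suc p < L")
    case False
    then have "Suc p = L"
      using that(2) by simp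
    moreover have "(c + voltage_sum a t L) mod k = c"
      using assms that(1) mod_add_right_eq[of c "voltage_sum a t L" k] by simp
    ultimately show ?thesis
      unfolding cover_vertex_def using that(1) by (simp add: voltage_sum_zero)
  qed (simp add: cover_vertex_def)
  show ?thesis
  proof (intro equalityI subsetI)
    fix e
    assume "e \<in> lift \<pi> a t"
    then obtain c p where cp: "c < k" "p < L" "e = {cover_vertex \<pi> a t c p,
        vertex ((c + voltage_sum a t (Suc p)) mod k) (layer \<pi> (Suc p mod L))}"
      unfolding lift_eq_cover_edges by blast
    then have "e = {cover_vertex \<pi> a t c p, cover_vertex \<pi> a t c (Suc p mod L)}"
      using next_eq by simp
    then show "e \<in> (\<Union>c<k. cycle_edges (map (cover_vertex \<pi> a t c) [0..<L]))"
      unfolding cycle_edges_map_upt using cp(1,2) by blast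
  next
    fix e
    assume "e \<in> (\<Union>c<k. cycle_edges (map (cover_vertex \<pi> a t c) [0..<L]))"
    then obtain c p where cp: "c < k" "p < L"
      "e = {cover_vertex \<pi> a t c p, cover_vertex \<pi> a t c (Suc p mod L)}"
      unfolding cycle_edges_map_upt by blast
    then have "e = {cover_vertex \<pi> a t c p,
        vertex ((c + voltage_sum a t (Suc p)) mod k) (layer \<pi> (Suc p mod L))}"
      using next_eq by simp
    then show "e \<in> lift \<pi> a t"
      unfolding lift_eq_cover_edges using cp(1,2) by blast
  qed
qed

lemma union_of_cycles_lift:
  assumes "is_perm \<pi>" "voltage_sum a t L mod k = 0"
  shows "union_of_cycles (k * L) k L (\<lambda>e. e \<in> lift \<pi> a t)"
proof -
  define vss where "vss = map (\<lambda>c. map (cover_vertex \<pi> a t c) [0..<L]) [0..<k]"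
  have "concat vss = map (cover_walk \<pi> a t) [0..<k * L]"
    unfolding vss_def concat_map_upt_grid[OF L_pos] cover_walk_def ..
  then have "distinct (concat vss)" "set (concat vss) = {1..k * L}"
    using cover_walk_inj[OF assms(1)] cover_walk_image[OF assms(1)]
    by (simp_all add: distinct_map lessThan_atLeast0)
  moreover have "lift \<pi> a t = (\<Union>vs\<in>set vss. cycle_edges vs)"
    unfolding vss_def lift_eq_sheet_cycle_edges[OF assms(2)] by auto
  ultimately show ?thesis
    unfolding union_of_cycles_def using lift_in_cube[OF assms(1), of a t] three_le_L
    by (intro conjI exI[of _ vss]) (auto simp: vss_def)
qed

lemma voltage_sum_Suc: "voltage_sum a t (Suc p) = voltage_sum a t p + voltage a t p"
  unfolding voltage_sum_def by simp

lemma voltage_sum_twist: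
  assumes "a < m"
  shows "voltage_sum a t p = voltage_sum a 0 p + (if 2 * a < p then t else 0)"
proof (induction p)
  case (Suc p)
  have "voltage a t p = voltage a 0 p + (if p = 2 * a then t else 0)"
    using assms unfolding voltage_def by auto
  with Suc.IH show ?case
    unfolding voltage_sum_Suc by auto
qed (simp add: voltage_sum_zero)

definition twist_union :: "nat \<Rightarrow> nat" where
  "twist_union a = k - voltage_sum a 0 L mod k"

definition twist_ham :: "nat \<Rightarrow> nat" where
  "twist_ham a = Suc (twist_union a)"

lemma voltage_sum_twist_union:
  assumes "a < m"
  shows "voltage_sum a (twist_union a) L mod k = 0"
proof -
  have "voltage_sum a (twist_union a) L = voltage_sum a 0 L + (k - voltage_sum a 0 L mod k)"
    using voltage_sum_twist[OF assms, of "twist_union a" L] assms L_lower unfolding twist_union_def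
    by simp
  also have "\<dots> = k * Suc (voltage_sum a 0 L div k)"
    unfolding mult_Suc_right
    using mult_div_mod_eq[of k "voltage_sum a 0 L"] mod_less_divisor[OF k_pos, of "voltage_sum a 0 L"]
    by linarith
  finally show ?thesis
    by simp
qed

lemma voltage_sum_twist_ham:
  assumes "a < m"
  shows "voltage_sum a (twist_ham a) L mod k = 1"
proof -
  have "voltage_sum a (twist_ham a) L = Suc (voltage_sum a (twist_union a) L)"
    using voltage_sum_twist[OF assms, of "twist_ham a" L] voltage_sum_twist[OF assms, of "twist_union a" L]
      assms L_lower unfolding twist_ham_def by simp
  then show ?thesis
    using voltage_sum_twist_union[OF assms] two_le_k mod_Suc by simp
qed


section \<open>Edge queries reveal at most one cell\<close>

definition lift_step :: "(nat \<Rightarrow> nat) \<Rightarrow> nat \<Rightarrow> nat \<Rightarrow> nat \<Rightarrow> nat \<Rightarrow> nat \<Rightarrow> nat \<Rightarrow> bool" where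
  "lift_step \<pi> a t l s l' s' \<longleftrightarrow>
     (\<exists>p<L. layer \<pi> p = l \<and> layer \<pi> (Suc p mod L) = l' \<and> s' = (s + voltage a t p) mod k)"

lemma vertex_pair_in_lift_iff:
  assumes "s < k" "s' < k"
  shows "{vertex s l, vertex s' l'} \<in> lift \<pi> a t \<longleftrightarrow> lift_step \<pi> a t l s l' s' \<or> lift_step \<pi> a t l' s' l s"
proof
  assume "{vertex s l, vertex s' l'} \<in> lift \<pi> a t"
  then obtain s0 p where sp: "s0 < k" "p < L" and eq: "{vertex s l, vertex s' l'} =
      {vertex s0 (layer \<pi> p), vertex ((s0 + voltage a t p) mod k) (layer \<pi> (Suc p mod L))}"
    unfolding lift_def by auto
  have "(s0 + voltage a t p) mod k < k"
    using k_pos by simp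
  with eq sp show "lift_step \<pi> a t l s l' s' \<or> lift_step \<pi> a t l' s' l s"
    unfolding lift_step_def doubleton_eq_iff using vertex_eq_iff assms by metis
next
  assume "lift_step \<pi> a t l s l' s' \<or> lift_step \<pi> a t l' s' l s"
  then show "{vertex s l, vertex s' l'} \<in> lift \<pi> a t"
    unfolding lift_step_def lift_def using assms by (auto simp: insert_commute)
qed

lemma lift_step_layer:
  assumes "is_perm \<pi>" "p < L"
  shows "lift_step \<pi> a t (layer \<pi> p) s l' s' \<longleftrightarrow>
    l' = layer \<pi> (Suc p mod L) \<and> s' = (s + voltage a t p) mod k"
  unfolding lift_step_def using inj_onD[OF layer_inj[OF assms(1)]] assms(2) by auto

lemma lift_step_low:
  assumes "is_perm \<pi>" "l < m"
  shows "lift_step \<pi> a t l s l' s' \<longleftrightarrow> l' = m + \<pi> l \<and> s' = (s + (if l = a then t else 1)) mod k"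
proof -
  have "layer \<pi> (2 * l) = l" "Suc (2 * l) mod L = Suc (2 * l)" "2 * l < L"
    using assms(2) L_lower unfolding layer_def by simp_all
  moreover have "layer \<pi> (Suc (2 * l)) = m + \<pi> l" "voltage a t (2 * l) = (if l = a then t else 1)"
    using assms(2) unfolding layer_def voltage_def by simp_all
  ultimately show ?thesis
    using lift_step_layer[OF assms(1), of "2 * l" a t s l' s'] by simp
qed

lemma lift_step_mid:
  assumes "is_perm \<pi>" "i < m" "s < k"
  shows "lift_step \<pi> a t (m + \<pi> i) s l' s' \<longleftrightarrow> l' = (if Suc i < m then Suc i else 2 * m) \<and> s' = s"
proof -
  have "layer \<pi> (Suc (2 * i)) = m + \<pi> i" "Suc (Suc (2 * i)) mod L = Suc (Suc (2 * i))" "Suc (2 * i) < L"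
    using assms(2) L_lower unfolding layer_def by simp_all
  moreover have "layer \<pi> (Suc (Suc (2 * i))) = (if Suc i < m then Suc i else 2 * m)"
    "voltage a t (Suc (2 * i)) = 0"
    using assms(2) unfolding layer_def voltage_def by auto
  ultimately show ?thesis
    using lift_step_layer[OF assms(1), of "Suc (2 * i)" a t s l' s'] assms(3) by simp
qed

lemma lift_step_high:
  assumes "is_perm \<pi>" "2 * m \<le> l" "l < L" "s < k"
  shows "lift_step \<pi> a t l s l' s' \<longleftrightarrow> l' = (if Suc l < L then Suc l else 0) \<and> s' = s"
proof -
  have "layer \<pi> l = l" "voltage a t l = 0"
    using assms(2) unfolding layer_def voltage_def by simp_all
  moreover have "layer \<pi> (Suc l mod L) = (if Suc l < L then Suc l else 0)"
    using assms(2,3) layer_zero unfolding layer_def by (auto simp: mod_Suc)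
  ultimately show ?thesis
    using lift_step_layer[OF assms(1,3), of a t s l' s'] assms(4) by simp
qed

lemma is_perm_preimage:
  assumes "is_perm \<pi>" "j < m"
  obtains i where "i < m" "\<pi> i = j" "\<And>i'. i' < m \<Longrightarrow> \<pi> i' = j \<Longrightarrow> i' = i"
proof -
  have "j \<in> \<pi> ` {..<m}"
    using assms unfolding is_perm_def bij_betw_def by auto
  then obtain i where "i < m" "\<pi> i = j"
    by auto
  moreover have "inj_on \<pi> {..<m}"
    using assms(1) unfolding is_perm_def bij_betw_def by simp
  ultimately show ?thesis
    using that inj_onD[of \<pi> "{..<m}"] by blast
qed

lemma lift_step_mid_iff:
  assumes "is_perm \<pi>" "j < m" "s < k"
  shows "lift_step \<pi> a t (m + j) s l' s' \<longleftrightarrow>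
    s' = s \<and> (\<exists>i<m. \<pi> i = j \<and> l' = (if Suc i < m then Suc i else 2 * m))"
proof -
  obtain i where i: "i < m" "\<pi> i = j" "\<And>i'. i' < m \<Longrightarrow> \<pi> i' = j \<Longrightarrow> i' = i"
    using is_perm_preimage[OF assms(1,2)] by blast
  have "lift_step \<pi> a t (m + j) s l' s' \<longleftrightarrow> l' = (if Suc i < m then Suc i else 2 * m) \<and> s' = s"
    using lift_step_mid[OF assms(1) i(1) assms(3)] i(2) by simp
  moreover have "(\<exists>i'<m. \<pi> i' = j \<and> l' = (if Suc i' < m then Suc i' else 2 * m)) \<longleftrightarrow>
      l' = (if Suc i < m then Suc i else 2 * m)"
  proof
    assume "\<exists>i'<m. \<pi> i' = j \<and> l' = (if Suc i' < m then Suc i' else 2 * m)"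
    then obtain i' where "i' < m" "\<pi> i' = j" "l' = (if Suc i' < m then Suc i' else 2 * m)"
      by blast
    then show "l' = (if Suc i < m then Suc i else 2 * m)"
      using i(3) by simp
  qed (use i(1,2) in blast)
  ultimately show ?thesis
    by blast
qed

lemma lift_step_mid_low:
  assumes "is_perm \<pi>" "j < m" "s' < k" "l < m"
  shows "lift_step \<pi> a t (m + j) s' l s \<longleftrightarrow> s = s' \<and> 0 < l \<and> \<pi> (l - 1) = j"
proof -
  have "(\<exists>i<m. \<pi> i = j \<and> l = (if Suc i < m then Suc i else 2 * m)) \<longleftrightarrow> 0 < l \<and> \<pi> (l - 1) = j"
  proof
    assume "\<exists>i<m. \<pi> i = j \<and> l = (if Suc i < m then Suc i else 2 * m)"
    then obtain i where "\<pi> i = j" "l = (if Suc i < m then Suc i else 2 * m)"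
      by blast
    moreover from this have "Suc i < m"
      using assms(4) by (auto split: if_splits)
    ultimately show "0 < l \<and> \<pi> (l - 1) = j"
      by simp
  next
    assume "0 < l \<and> \<pi> (l - 1) = j"
    then show "\<exists>i<m. \<pi> i = j \<and> l = (if Suc i < m then Suc i else 2 * m)"
      using assms(4) by (intro exI[of _ "l - 1"]) simp
  qed
  then show ?thesis
    using lift_step_mid_iff[OF assms(1-3)] by blast
qed

lemma lift_step_mid_high:
  assumes "is_perm \<pi>" "j < m" "s < k" "2 * m \<le> l'"
  shows "lift_step \<pi> a t (m + j) s l' s' \<longleftrightarrow> l' = 2 * m \<and> s' = s \<and> \<pi> (m - 1) = j"
proof -
  have "(\<exists>i<m. \<pi> i = j \<and> l' = (if Suc i < m then Suc i else 2 * m)) \<longleftrightarrow> l' = 2 * m \<and> \<pi> (m - 1) = j"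
  proof
    assume "\<exists>i<m. \<pi> i = j \<and> l' = (if Suc i < m then Suc i else 2 * m)"
    then obtain i where "i < m" "\<pi> i = j" "l' = (if Suc i < m then Suc i else 2 * m)"
      by blast
    moreover from this have "\<not> Suc i < m"
      using assms(4) by (auto split: if_splits)
    ultimately show "l' = 2 * m \<and> \<pi> (m - 1) = j"
      by (metis Suc_lessI diff_Suc_1)
  next
    assume "l' = 2 * m \<and> \<pi> (m - 1) = j"
    then show "\<exists>i<m. \<pi> i = j \<and> l' = (if Suc i < m then Suc i else 2 * m)"
      using one_le_m by (intro exI[of _ "m - 1"]) simp
  qed
  then show ?thesis
    using lift_step_mid_iff[OF assms(1-3)] by blast
qed

definition edge_decided :: "nat \<Rightarrow> nat \<Rightarrow> nat set \<Rightarrow> ((nat \<Rightarrow> nat) \<Rightarrow> bool) \<Rightarrow> bool" where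
  "edge_decided a j e \<Phi> \<longleftrightarrow>
     (\<forall>\<pi> a' t. is_perm \<pi> \<longrightarrow> a' < m \<longrightarrow> \<not> (a' = a \<and> \<pi> a = j) \<longrightarrow> (e \<in> lift \<pi> a' t) = \<Phi> \<pi>)"

text \<open>Only the twisted edge can make a query depend on two cells of \<open>\<pi>\<close>: once the cell
  \<open>(a, j)\<close> is ruled out as the position \<open>(a', \<pi> a')\<close> of the twist, the answer to \<open>e\<close> is a constant
  or the truth of \<open>\<pi> c = d\<close>.\<close>

definition one_cell_query :: "nat set \<Rightarrow> bool" where
  "one_cell_query e \<longleftrightarrow> (\<exists>a<m. \<exists>j<m.
     (\<exists>b. edge_decided a j e (\<lambda>_. b)) \<or> (\<exists>c<m. \<exists>d<m. edge_decided a j e (\<lambda>\<pi>. \<pi> c = d)))"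

lemma one_cell_query_const_off:
  assumes "a < m" "j < m" "edge_decided a j e (\<lambda>_. b)"
  shows "one_cell_query e"
  using assms unfolding one_cell_query_def by blast

lemma one_cell_query_const:
  assumes "\<And>\<pi> a t. is_perm \<pi> \<Longrightarrow> (e \<in> lift \<pi> a t) = b"
  shows "one_cell_query e"
proof -
  have "edge_decided 0 0 e (\<lambda>_. b)"
    using assms unfolding edge_decided_def by simp
  with one_le_m show ?thesis
    by (intro one_cell_query_const_off[of 0 0]) simp_all
qed

lemma one_cell_query_cell:
  assumes "a < m" "j < m" "c < m" "d < m" "edge_decided a j e (\<lambda>\<pi>. \<pi> c = d)"
  shows "one_cell_query e"
  using assms unfolding one_cell_query_def by blast

lemma one_cell_query_low_mid:
  assumes "s < k" "s' < k" "l < m" "j < m"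
  shows "one_cell_query {vertex s l, vertex s' (m + j)}"
proof -
  let ?e = "{vertex s l, vertex s' (m + j)}"
  have edge: "(?e \<in> lift \<pi> a' t) \<longleftrightarrow>
      (\<pi> l = j \<and> s' = (s + 1) mod k) \<or> (s = s' \<and> 0 < l \<and> \<pi> (l - 1) = j)"
    if "is_perm \<pi>" "\<not> (a' = l \<and> \<pi> l = j)" for \<pi> a' t
    using vertex_pair_in_lift_iff[OF assms(1,2)] lift_step_low[OF that(1) assms(3)]
      lift_step_mid_low[OF that(1) assms(4,2,3)] that(2) by auto
  have "(s + 1) mod k \<noteq> s"
  proof (cases "Suc s < k")
    case False
    then have "Suc s = k"
      using assms(1) by simp
    then show ?thesis
      using two_le_k by auto
  qed simp
  then consider "s' = (s + 1) mod k" | "s' \<noteq> (s + 1) mod k" "s = s'" "0 < l"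
    | "s' \<noteq> (s + 1) mod k" "\<not> (s = s' \<and> 0 < l)"
    by blast
  then show ?thesis
  proof cases
    case 1
    then have "edge_decided l j ?e (\<lambda>\<pi>. \<pi> l = j)"
      using edge \<open>(s + 1) mod k \<noteq> s\<close> unfolding edge_decided_def by auto
    with assms(3,4) show ?thesis
      by (intro one_cell_query_cell[of l j l j]) simp_all
  next
    case 2
    then have "edge_decided l j ?e (\<lambda>\<pi>. \<pi> (l - 1) = j)"
      using edge unfolding edge_decided_def by auto
    with assms(3,4) show ?thesis
      by (intro one_cell_query_cell[of l j "l - 1" j]) simp_all
  next
    case 3
    then have "edge_decided l j ?e (\<lambda>_. False)"
      using edge unfolding edge_decided_def by auto
    with assms(3,4) show ?thesis
      by (intro one_cell_query_const_off[of l j]) simp_all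
  qed
qed

lemma one_cell_query_mid_high:
  assumes "s < k" "s' < k" "j < m" "2 * m \<le> l'" "l' < L"
  shows "one_cell_query {vertex s (m + j), vertex s' l'}"
proof -
  let ?e = "{vertex s (m + j), vertex s' l'}"
  have edge: "(?e \<in> lift \<pi> a t) \<longleftrightarrow> l' = 2 * m \<and> s' = s \<and> \<pi> (m - 1) = j"
    if "is_perm \<pi>" for \<pi> a t
  proof -
    have "\<not> lift_step \<pi> a t l' s' (m + j) s"
      using lift_step_high[OF that assms(4,5,2), of a t "m + j" s] assms(3,4) one_le_m by simp
    then show ?thesis
      using vertex_pair_in_lift_iff[OF assms(1,2)]
        lift_step_mid_high[OF that assms(3,1,4), of a t s'] by simp
  qed
  show ?thesis
  proof (cases "l' = 2 * m \<and> s' = s")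
    case True
    then have "edge_decided 0 0 ?e (\<lambda>\<pi>. \<pi> (m - 1) = j)"
      using edge unfolding edge_decided_def by auto
    with one_le_m assms(3) show ?thesis
      by (intro one_cell_query_cell[of 0 0 "m - 1" j]) simp_all
  next
    case False
    then show ?thesis
      using edge by (intro one_cell_query_const[of _ False]) auto
  qed
qed

lemma one_cell_query_low_low:
  assumes "s < k" "s' < k" "l < m" "l' < m"
  shows "one_cell_query {vertex s l, vertex s' l'}"
proof (rule one_cell_query_const[of _ False])
  fix \<pi> a t
  assume \<pi>: "is_perm \<pi>"
  show "({vertex s l, vertex s' l'} \<in> lift \<pi> a t) = False"
    using lift_step_low[OF \<pi>, of l a t s l' s'] lift_step_low[OF \<pi>, of l' a t s' l s] assms
    unfolding vertex_pair_in_lift_iff[OF assms(1,2)] by simp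
qed

lemma one_cell_query_mid_mid:
  assumes "s < k" "s' < k" "j < m" "j' < m"
  shows "one_cell_query {vertex s (m + j), vertex s' (m + j')}"
proof (rule one_cell_query_const[of _ False])
  fix \<pi> a t
  assume \<pi>: "is_perm \<pi>"
  show "({vertex s (m + j), vertex s' (m + j')} \<in> lift \<pi> a t) = False"
  proof -
    have "m + j'' \<noteq> (if Suc i < m then Suc i else 2 * m)" if "j'' < m" for i j''
      using that by simp
    then show ?thesis
      using lift_step_mid_iff[OF \<pi> assms(3,1), of a t "m + j'" s']
        lift_step_mid_iff[OF \<pi> assms(4,2), of a t "m + j" s] assms(3,4)
      unfolding vertex_pair_in_lift_iff[OF assms(1,2)] by blast
  qed
qed

lemma one_cell_query_low_high:
  assumes "s < k" "s' < k" "l < m" "2 * m \<le> l'" "l' < L"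
  shows "one_cell_query {vertex s l, vertex s' l'}"
proof (rule one_cell_query_const[of _ "l = (if Suc l' < L then Suc l' else 0) \<and> s = s'"])
  fix \<pi> a t
  assume \<pi>: "is_perm \<pi>"
  show "({vertex s l, vertex s' l'} \<in> lift \<pi> a t) = (l = (if Suc l' < L then Suc l' else 0) \<and> s = s')"
    using lift_step_low[OF \<pi>, of l a t s l' s'] is_perm_less[OF \<pi>, of l]
      lift_step_high[OF \<pi> assms(4,5,2), of a t l s] assms
    unfolding vertex_pair_in_lift_iff[OF assms(1,2)] by simp
qed

lemma one_cell_query_high_high:
  assumes "s < k" "s' < k" "2 * m \<le> l" "2 * m \<le> l'" "l < L" "l' < L"
  shows "one_cell_query {vertex s l, vertex s' l'}"
proof (rule one_cell_query_const[of _ "(l' = (if Suc l < L then Suc l else 0) \<and> s' = s) \<or>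
    (l = (if Suc l' < L then Suc l' else 0) \<and> s = s')"])
  fix \<pi> a t
  assume \<pi>: "is_perm \<pi>"
  show "({vertex s l, vertex s' l'} \<in> lift \<pi> a t) = ((l' = (if Suc l < L then Suc l else 0) \<and> s' = s) \<or>
      (l = (if Suc l' < L then Suc l' else 0) \<and> s = s'))"
    using lift_step_high[OF \<pi> assms(3,5,1), of a t l' s'] lift_step_high[OF \<pi> assms(4,6,2), of a t l s]
    unfolding vertex_pair_in_lift_iff[OF assms(1,2)] by simp
qed

lemma one_cell_query_vertex_pair:
  assumes s: "s < k" "s' < k" and l: "l \<le> l'" "l' < L"
  shows "one_cell_query {vertex s l, vertex s' l'}"
proof -
  consider "l' < m" | "l < m" "m \<le> l'" "l' < 2 * m" | "l < m" "2 * m \<le> l'"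
    | "m \<le> l" "l' < 2 * m" | "m \<le> l" "l < 2 * m" "2 * m \<le> l'" | "2 * m \<le> l"
    by linarith
  then show ?thesis
  proof cases
    case 1
    then show ?thesis
      using one_cell_query_low_low[OF s] l by simp
  next
    case 2
    then show ?thesis
      using one_cell_query_low_mid[OF s 2(1), of "l' - m"] by simp
  next
    case 3
    show ?thesis
      using one_cell_query_low_high[OF s 3 l(2)] .
  next
    case 4
    then show ?thesis
      using one_cell_query_mid_mid[OF s, of "l - m" "l' - m"] l by simp
  next
    case 5
    then show ?thesis
      using one_cell_query_mid_high[OF s, of "l - m" l'] l by simp
  next
    case 6
    then show ?thesis
      using one_cell_query_high_high[OF s 6] l by simp
  qed
qed

lemma pairs_one_cell_query:
  assumes "e \<in> pairs (k * L)"
  shows "one_cell_query e"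
proof -
  obtain u w where e: "e = {u, w}" "u \<in> {1..k * L}" "w \<in> {1..k * L}"
    using assms unfolding pairs_def by (auto simp: card_2_iff)
  obtain s l where sl: "s < k" "l < L" "u = vertex s l"
    using e(2) by (rule vertex_cases)
  obtain s' l' where sl': "s' < k" "l' < L" "w = vertex s' l'"
    using e(3) by (rule vertex_cases)
  show ?thesis
  proof (cases "l \<le> l'")
    case True
    then show ?thesis
      using one_cell_query_vertex_pair[OF sl(1) sl'(1) True sl'(2)] e(1) sl(3) sl'(3) by simp
  next
    case False
    then show ?thesis
      using one_cell_query_vertex_pair[OF sl'(1) sl(1) _ sl(2), of l'] e(1) sl(3) sl'(3)
      by (simp add: insert_commute)
  qed
qed


section \<open>The adversary\<close>

definition cells :: "(nat \<times> nat) set" where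
  "cells = {..<m} \<times> {..<m}"

definition partial_bij :: "(nat \<times> nat) set \<Rightarrow> bool" where
  "partial_bij P \<longleftrightarrow> (\<forall>x\<in>P. \<forall>y\<in>P. fst x = fst y \<longleftrightarrow> snd x = snd y)"

lemma finite_cells: "finite cells"
  unfolding cells_def by simp

lemma is_perm_extend:
  assumes P: "partial_bij P" "P \<subseteq> cells"
    and \<mu>: "bij_betw \<mu> ({..<m} - fst ` P) ({..<m} - snd ` P)"
  obtains \<pi> where "is_perm \<pi>" "\<forall>y\<in>P. \<pi> (fst y) = snd y" "\<forall>a\<in>{..<m} - fst ` P. \<pi> a = \<mu> a"
proof -
  define f where "f a = (THE j. (a, j) \<in> P)" for a
  define \<pi> where "\<pi> a = (if a \<in> fst ` P then f a else \<mu> a)" for a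
  have f: "f (fst y) = snd y" if "y \<in> P" for y
  proof -
    have "j = snd y" if "(fst y, j) \<in> P" for j
      using P(1) \<open>y \<in> P\<close> that unfolding partial_bij_def by fastforce
    then show ?thesis
      unfolding f_def using that by (intro the_equality) simp_all
  qed
  have "inj_on f (fst ` P)"
  proof (rule inj_onI)
    fix a a'
    assume "a \<in> fst ` P" "a' \<in> fst ` P" "f a = f a'"
    then obtain y y' where "y \<in> P" "y' \<in> P" "a = fst y" "a' = fst y'" "snd y = snd y'"
      using f by auto
    then show "a = a'"
      using P(1) unfolding partial_bij_def by blast
  qed
  moreover have "f ` fst ` P = snd ` P"
    unfolding image_image using f by (rule image_cong[OF refl])
  ultimately have "bij_betw f (fst ` P) (snd ` P)"
    unfolding bij_betw_def by simp
  then have "bij_betw \<pi> (fst ` P) (snd ` P)"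
    using bij_betw_cong[of "fst ` P" \<pi> f "snd ` P"] by (simp add: \<pi>_def)
  moreover have "bij_betw \<pi> ({..<m} - fst ` P) ({..<m} - snd ` P)"
    using \<mu> bij_betw_cong[of "{..<m} - fst ` P" \<pi> \<mu>] by (simp add: \<pi>_def)
  moreover have "fst ` P \<subseteq> {..<m}" "snd ` P \<subseteq> {..<m}"
    using P(2) unfolding cells_def by auto
  ultimately have "bij_betw \<pi> {..<m} {..<m}"
    using bij_betw_combine[of \<pi> "fst ` P" "snd ` P" "{..<m} - fst ` P" "{..<m} - snd ` P"]
    by (simp add: Un_Diff_cancel Un_absorb1)
  then show ?thesis
    using f by (intro that[of \<pi>]) (auto simp: is_perm_def \<pi>_def)
qed

text \<open>The adversary keeps forbidden cells \<open>F\<close>, committed cells \<open>P\<close> of \<open>\<pi>\<close>, and cells \<open>Q\<close>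
  excluded as the position \<open>(a, \<pi> a)\<close> of the twist.\<close>

definition consistent ::
  "(nat \<times> nat) set \<Rightarrow> (nat \<times> nat) set \<Rightarrow> (nat \<times> nat) set \<Rightarrow> (nat \<Rightarrow> nat) \<Rightarrow> nat \<Rightarrow> bool" where
  "consistent F P Q \<pi> a \<longleftrightarrow> is_perm \<pi> \<and> (\<forall>i<m. (i, \<pi> i) \<notin> F) \<and> (\<forall>y\<in>P. \<pi> (fst y) = snd y) \<and>
     a < m \<and> a \<notin> fst ` P \<and> (a, \<pi> a) \<notin> Q"

definition load_cap :: nat where
  "load_cap = m div 4"

definition cell_inv :: "(nat \<times> nat) set \<Rightarrow> (nat \<times> nat) set \<Rightarrow> nat \<Rightarrow> bool" where
  "cell_inv F P q \<longleftrightarrow> F \<subseteq> cells \<and> P \<subseteq> cells \<and> partial_bij P \<and> P \<inter> F = {} \<and>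
     (\<forall>a<m. a \<notin> fst ` P \<longrightarrow> row_load F a \<le> load_cap) \<and>
     (\<forall>j<m. j \<notin> snd ` P \<longrightarrow> col_load F j \<le> load_cap) \<and>
     (\<forall>y\<in>P. load_cap \<le> row_load F (fst y) \<or> load_cap \<le> col_load F (snd y)) \<and>
     card F \<le> q \<and> card P \<le> q"

definition adversary_inv ::
  "(nat \<times> nat) set \<Rightarrow> (nat \<times> nat) set \<Rightarrow> (nat \<times> nat) set \<Rightarrow> nat \<Rightarrow> bool" where
  "adversary_inv F P Q q \<longleftrightarrow> cell_inv F P q \<and> Q \<subseteq> cells \<and> card Q \<le> q"

lemma cell_inv_finite: "cell_inv F P q \<Longrightarrow> finite F \<and> finite P"
  unfolding cell_inv_def using finite_cells finite_subset by blast

lemma cell_inv_Suc: "cell_inv F P q \<Longrightarrow> cell_inv F P (Suc q)"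
  unfolding cell_inv_def by auto

lemma cell_inv_forbid:
  assumes inv: "cell_inv F P q" and "a < m" "j < m" "(a, j) \<notin> P" "(a, j) \<notin> F"
    and light: "row_load F a < load_cap" "col_load F j < load_cap"
  shows "cell_inv (insert (a, j) F) P (Suc q)"
proof -
  let ?F = "insert (a, j) F"
  have fin: "finite F"
    using cell_inv_finite[OF inv] by simp
  have row: "row_load ?F a' \<le> load_cap" if "a' < m" "a' \<notin> fst ` P" for a'
    using inv that light(1) row_load_insert_same[OF fin \<open>(a, j) \<notin> F\<close>] row_load_insert_other[of a a' j F]
    unfolding cell_inv_def by (cases "a' = a") auto
  have col: "col_load ?F j' \<le> load_cap" if "j' < m" "j' \<notin> snd ` P" for j'
  proof -
    have "finite (F\<inverse>)" "(j, a) \<notin> F\<inverse>" "?F\<inverse> = insert (j, a) (F\<inverse>)"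
      using fin \<open>(a, j) \<notin> F\<close> by auto
    then show ?thesis
      using inv that light(2) row_load_insert_same[of "F\<inverse>" j a] row_load_insert_other[of j j' a "F\<inverse>"]
      unfolding cell_inv_def col_load_eq_row_load_converse by (cases "j' = j") auto
  qed
  have "row_load F b \<le> row_load ?F b" "col_load F b \<le> col_load ?F b" for b
    using fin row_load_mono[of "?F" F b] row_load_mono[of "?F\<inverse>" "F\<inverse>" b]
    unfolding col_load_eq_row_load_converse by auto
  then have "\<forall>y\<in>P. load_cap \<le> row_load ?F (fst y) \<or> load_cap \<le> col_load ?F (snd y)"
    using inv unfolding cell_inv_def by (meson le_trans)
  moreover have "card ?F \<le> Suc q"
    using inv fin unfolding cell_inv_def by (simp add: card_insert_if)
  ultimately show ?thesis
    using inv row col assms(2-4) unfolding cell_inv_def cells_def by auto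
qed

lemma cell_inv_commit:
  assumes inv: "cell_inv F P q" and "a < m" "j < m" "a \<notin> fst ` P" "j \<notin> snd ` P" "(a, j) \<notin> F"
    and heavy: "load_cap \<le> row_load F a \<or> load_cap \<le> col_load F j"
  shows "cell_inv F (insert (a, j) P) (Suc q)"
proof -
  have "partial_bij (insert (a, j) P)"
    using inv assms(4,5) unfolding cell_inv_def partial_bij_def by (auto simp: image_iff)
  moreover have "card (insert (a, j) P) \<le> Suc q"
    using inv cell_inv_finite[OF inv] unfolding cell_inv_def by (simp add: card_insert_if)
  ultimately show ?thesis
    using inv assms(2,3,6) heavy unfolding cell_inv_def cells_def by auto
qed

lemma consistent_insert:
  "consistent (insert x F) P Q \<pi> a \<Longrightarrow> consistent F P Q \<pi> a"
  "consistent F (insert x P) Q \<pi> a \<Longrightarrow> consistent F P Q \<pi> a"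
  "consistent F P (insert x Q) \<pi> a \<Longrightarrow> consistent F P Q \<pi> a"
  unfolding consistent_def by auto

lemma consistent_blocked_cell:
  assumes "consistent F P Q \<pi> a" "cell_inv F P q" "c < m"
    and "(c, d) \<notin> P" "c \<in> fst ` P \<or> d \<in> snd ` P"
  shows "\<pi> c \<noteq> d"
proof
  assume "\<pi> c = d"
  from assms(5) obtain y where y: "y \<in> P" "fst y = c \<or> snd y = d"
    by auto
  moreover have "fst y < m"
    using y(1) assms(2) unfolding cell_inv_def cells_def by auto
  moreover have "inj_on \<pi> {..<m}" "\<pi> (fst y) = snd y"
    using assms(1) y(1) unfolding consistent_def is_perm_def bij_betw_def by auto
  ultimately have "fst y = c" "snd y = d"
    using \<open>\<pi> c = d\<close> assms(3) inj_onD[of \<pi> "{..<m}" "fst y" c] by auto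
  then have "y = (c, d)"
    by (simp add: prod_eq_iff)
  then show False
    using assms(4) y(1) by simp
qed

lemma cell_query_step:
  assumes inv: "cell_inv F P q" and "c < m" "d < m"
  shows "\<exists>F' P' b. cell_inv F' P' (Suc q) \<and> (\<forall>\<pi> a. consistent F' P' Q \<pi> a \<longrightarrow> consistent F P Q \<pi> a) \<and>
     (\<forall>\<pi> a. consistent F' P' Q \<pi> a \<longrightarrow> (\<pi> c = d) = b)"
proof -
  consider "(c, d) \<in> P" | "(c, d) \<notin> P" "c \<in> fst ` P \<or> d \<in> snd ` P" | "(c, d) \<in> F"
    | "c \<notin> fst ` P" "d \<notin> snd ` P" "(c, d) \<notin> F" "row_load F c < load_cap" "col_load F d < load_cap"
    | "c \<notin> fst ` P" "d \<notin> snd ` P" "(c, d) \<notin> F" "load_cap \<le> row_load F c \<or> load_cap \<le> col_load F d"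
    by (meson image_eqI fst_conv snd_conv not_le)
  then show ?thesis
  proof cases
    case 1
    then have "consistent F P Q \<pi> a \<Longrightarrow> \<pi> c = d" for \<pi> a
      unfolding consistent_def by force
    then show ?thesis
      using cell_inv_Suc[OF inv] by (intro exI[of _ F] exI[of _ P] exI[of _ True]) simp
  next
    case 2
    then have "consistent F P Q \<pi> a \<Longrightarrow> \<pi> c \<noteq> d" for \<pi> a
      using consistent_blocked_cell inv \<open>c < m\<close> by blast
    then show ?thesis
      using cell_inv_Suc[OF inv] by (intro exI[of _ F] exI[of _ P] exI[of _ False]) simp
  next
    case 3
    then have "consistent F P Q \<pi> a \<Longrightarrow> \<pi> c \<noteq> d" for \<pi> a
      using \<open>c < m\<close> unfolding consistent_def by force
    then show ?thesis
      using cell_inv_Suc[OF inv] by (intro exI[of _ F] exI[of _ P] exI[of _ False]) simp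
  next
    case 4
    then have "(c, d) \<notin> P"
      by force
    with 4 have "cell_inv (insert (c, d) F) P (Suc q)"
      using assms by (intro cell_inv_forbid) auto
    moreover have "consistent (insert (c, d) F) P Q \<pi> a \<Longrightarrow> \<pi> c \<noteq> d" for \<pi> a
      using \<open>c < m\<close> unfolding consistent_def by auto
    ultimately show ?thesis
      using consistent_insert(1) by (intro exI[of _ "insert (c, d) F"] exI[of _ P] exI[of _ False]) simp
  next
    case 5
    then have "cell_inv F (insert (c, d) P) (Suc q)"
      using assms by (intro cell_inv_commit) auto
    moreover have "consistent F (insert (c, d) P) Q \<pi> a \<Longrightarrow> \<pi> c = d" for \<pi> a
      unfolding consistent_def by auto
    ultimately show ?thesis
      using consistent_insert(2) by (intro exI[of _ F] exI[of _ "insert (c, d) P"] exI[of _ True]) simp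
  qed
qed

lemma edge_query_step:
  assumes inv: "adversary_inv F P Q q" and e: "e \<in> pairs (k * L)"
  shows "\<exists>F' P' Q' b. adversary_inv F' P' Q' (Suc q) \<and>
     (\<forall>\<pi> a. consistent F' P' Q' \<pi> a \<longrightarrow> consistent F P Q \<pi> a) \<and>
     (\<forall>\<pi> a t. consistent F' P' Q' \<pi> a \<longrightarrow> (e \<in> lift \<pi> a t) = b)"
proof -
  obtain a0 j0 where aj: "a0 < m" "j0 < m" and query:
    "(\<exists>b. edge_decided a0 j0 e (\<lambda>_. b)) \<or> (\<exists>c<m. \<exists>d<m. edge_decided a0 j0 e (\<lambda>\<pi>. \<pi> c = d))"
    using pairs_one_cell_query[OF e] unfolding one_cell_query_def by blast
  define Q' where "Q' = insert (a0, j0) Q"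
  have Q': "Q' \<subseteq> cells" "card Q' \<le> Suc q"
    using inv aj finite_subset[OF _ finite_cells, of Q] unfolding adversary_inv_def Q'_def cells_def
    by (auto simp: card_insert_if)
  have decided: "(e \<in> lift \<pi> a t) = \<Phi> \<pi>"
    if "edge_decided a0 j0 e \<Phi>" "consistent F' P' Q' \<pi> a" for \<Phi> F' P' \<pi> a t
    using that unfolding edge_decided_def consistent_def Q'_def by auto
  from query show ?thesis
  proof
    assume "\<exists>b. edge_decided a0 j0 e (\<lambda>_. b)"
    then obtain b where "edge_decided a0 j0 e (\<lambda>_. b)"
      by blast
    moreover have "adversary_inv F P Q' (Suc q)"
      using inv Q' cell_inv_Suc unfolding adversary_inv_def by blast
    ultimately show ?thesis
      using decided consistent_insert(3) unfolding Q'_def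
      by (intro exI[of _ F] exI[of _ P] exI[of _ Q'] exI[of _ b]) (simp add: Q'_def)
  next
    assume "\<exists>c<m. \<exists>d<m. edge_decided a0 j0 e (\<lambda>\<pi>. \<pi> c = d)"
    then obtain c d where "c < m" "d < m" and cell: "edge_decided a0 j0 e (\<lambda>\<pi>. \<pi> c = d)"
      by blast
    then obtain F' P' b where step: "cell_inv F' P' (Suc q)"
      "\<forall>\<pi> a. consistent F' P' Q \<pi> a \<longrightarrow> consistent F P Q \<pi> a"
      "\<forall>\<pi> a. consistent F' P' Q \<pi> a \<longrightarrow> (\<pi> c = d) = b"
      using cell_query_step[of F P q c d Q] inv unfolding adversary_inv_def by blast
    have "adversary_inv F' P' Q' (Suc q)"
      using step(1) Q' unfolding adversary_inv_def by blast
    moreover have "consistent F' P' Q' \<pi> a \<Longrightarrow> consistent F P Q \<pi> a" for \<pi> a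
      using step(2) consistent_insert(3) unfolding Q'_def by blast
    moreover have "consistent F' P' Q' \<pi> a \<Longrightarrow> (e \<in> lift \<pi> a t) = b" for \<pi> a t
      using decided[OF cell] step(3) consistent_insert(3) unfolding Q'_def by blast
    ultimately show ?thesis
      by blast
  qed
qed

lemma committed_cells_bound:
  assumes inv: "cell_inv F P q"
  shows "load_cap * card P \<le> 2 * card F"
proof -
  have fin: "finite F" "finite P"
    using cell_inv_finite[OF inv] by auto
  define Hr where "Hr = {a\<in>{..<m}. load_cap \<le> row_load F a}"
  define Hc where "Hc = {j\<in>{..<m}. load_cap \<le> col_load F j}"
  have P: "partial_bij P" "P \<subseteq> cells"
    using inv unfolding cell_inv_def by auto
  have "P \<subseteq> {y\<in>P. fst y \<in> Hr} \<union> {y\<in>P. snd y \<in> Hc}"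
  proof
    fix y
    assume "y \<in> P"
    then have "fst y < m" "snd y < m" "load_cap \<le> row_load F (fst y) \<or> load_cap \<le> col_load F (snd y)"
      using inv unfolding cell_inv_def cells_def by auto
    with \<open>y \<in> P\<close> show "y \<in> {y\<in>P. fst y \<in> Hr} \<union> {y\<in>P. snd y \<in> Hc}"
      unfolding Hr_def Hc_def by auto
  qed
  then have "card P \<le> card ({y\<in>P. fst y \<in> Hr} \<union> {y\<in>P. snd y \<in> Hc})"
    using fin(2) by (intro card_mono) auto
  also have "\<dots> \<le> card {y\<in>P. fst y \<in> Hr} + card {y\<in>P. snd y \<in> Hc}"
    by (rule card_Un_le)
  also have "card {y\<in>P. fst y \<in> Hr} \<le> card Hr"
    using P(1) unfolding partial_bij_def Hr_def
    by (intro card_inj_on_le[of fst]) (auto simp: inj_on_def prod_eq_iff)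
  also have "card {y\<in>P. snd y \<in> Hc} \<le> card Hc"
    using P(1) unfolding partial_bij_def Hc_def
    by (intro card_inj_on_le[of snd]) (auto simp: inj_on_def prod_eq_iff)
  finally have "load_cap * card P \<le> load_cap * card Hr + load_cap * card Hc"
    using mult_le_mono2[of "card P" "card Hr + card Hc" load_cap] by (simp add: add_mult_distrib2)
  also have "\<dots> \<le> card F + card F"
    using card_heavy_rows[OF fin(1), of "{..<m}" load_cap] card_heavy_cols[OF fin(1), of "{..<m}" load_cap]
    unfolding Hr_def Hc_def by simp
  finally show ?thesis
    by simp
qed

lemma card_uncommitted:
  assumes "partial_bij P" "P \<subseteq> cells"
  shows "card ({..<m} - fst ` P) = m - card P" "card ({..<m} - snd ` P) = m - card P"
proof -
  have "inj_on fst P" "inj_on snd P"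
    using assms(1) unfolding partial_bij_def inj_on_def by (auto simp: prod_eq_iff)
  moreover have "fst ` P \<subseteq> {..<m}" "snd ` P \<subseteq> {..<m}"
    using assms(2) unfolding cells_def by auto
  ultimately show "card ({..<m} - fst ` P) = m - card P" "card ({..<m} - snd ` P) = m - card P"
    by (simp_all add: card_Diff_subset finite_subset card_image)
qed

lemma avoiding_bij_uncommitted:
  assumes inv: "cell_inv F P q" and room: "card P + 1 + 2 * load_cap \<le> m"
    and xy: "x < m" "x \<notin> fst ` P" "y < m" "y \<notin> snd ` P"
  obtains \<mu> where "bij_betw \<mu> ({..<m} - fst ` P - {x}) ({..<m} - snd ` P - {y})"
    "\<forall>r\<in>{..<m} - fst ` P - {x}. (r, \<mu> r) \<notin> F"
proof -
  define R where "R = {..<m} - fst ` P - {x}"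
  define C where "C = {..<m} - snd ` P - {y}"
  have fin: "finite F"
    using cell_inv_finite[OF inv] by simp
  have light: "\<forall>a<m. a \<notin> fst ` P \<longrightarrow> row_load F a \<le> load_cap"
      "\<forall>j<m. j \<notin> snd ` P \<longrightarrow> col_load F j \<le> load_cap"
    using inv unfolding cell_inv_def by auto
  have card: "card R = m - card P - 1" "card C = m - card P - 1"
    using card_uncommitted[of P] inv xy unfolding R_def C_def cell_inv_def by simp_all
  have deg_row: "\<forall>r\<in>R. card {c\<in>C. (r, c) \<in> F} \<le> load_cap"
  proof
    fix r
    assume "r \<in> R"
    have "card {c\<in>C. (r, c) \<in> F} \<le> row_load F r"
      unfolding row_load_def using finite_row[OF fin] by (intro card_mono) auto
    then show "card {c\<in>C. (r, c) \<in> F} \<le> load_cap"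
      using light(1) \<open>r \<in> R\<close> unfolding R_def by (meson DiffE le_trans lessThan_iff)
  qed
  have deg_col: "\<forall>c\<in>C. card {r\<in>R. (r, c) \<in> F} \<le> load_cap"
  proof
    fix c
    assume "c \<in> C"
    have "card {r\<in>R. (r, c) \<in> F} \<le> col_load F c"
      unfolding col_load_eq_row_load_converse row_load_def using finite_row[of "F\<inverse>" c] fin
      by (intro card_mono) auto
    then show "card {r\<in>R. (r, c) \<in> F} \<le> load_cap"
      using light(2) \<open>c \<in> C\<close> unfolding C_def by (meson DiffE le_trans lessThan_iff)
  qed
  have "finite R" "finite C" "2 * load_cap \<le> m - card P - 1"
    using room unfolding R_def C_def by simp_all
  then show ?thesis
    using avoiding_bij_exists[OF _ _ card deg_row deg_col] that unfolding R_def C_def by blast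
qed

lemma avoiding_perm_exists:
  assumes inv: "cell_inv F P q" and room: "card P + 1 + 2 * load_cap \<le> m"
    and xy: "x < m" "x \<notin> fst ` P" "y < m" "y \<notin> snd ` P" "(x, y) \<notin> F"
  obtains \<pi> where "is_perm \<pi>" "\<forall>i<m. (i, \<pi> i) \<notin> F" "\<forall>z\<in>P. \<pi> (fst z) = snd z" "\<pi> x = y"
proof -
  define R where "R = {..<m} - fst ` P - {x}"
  define C where "C = {..<m} - snd ` P - {y}"
  obtain \<mu> where \<mu>: "bij_betw \<mu> R C" "\<forall>r\<in>R. (r, \<mu> r) \<notin> F"
    using avoiding_bij_uncommitted[OF inv room xy(1-4)] unfolding R_def C_def by blast
  have "bij_betw (\<mu>(x := y)) R C"
    using \<mu>(1) by (rule bij_betw_cong[THEN iffD1, rotated]) (simp add: R_def)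
  moreover have "bij_betw (\<mu>(x := y)) {x} {y}"
    by simp
  ultimately have "bij_betw (\<mu>(x := y)) (R \<union> {x}) (C \<union> {y})"
    by (rule bij_betw_combine) (simp add: C_def)
  moreover have "R \<union> {x} = {..<m} - fst ` P" "C \<union> {y} = {..<m} - snd ` P"
    using xy unfolding R_def C_def by auto
  ultimately have "bij_betw (\<mu>(x := y)) ({..<m} - fst ` P) ({..<m} - snd ` P)"
    by simp
  moreover have P: "partial_bij P" "P \<subseteq> cells" "P \<inter> F = {}"
    using inv unfolding cell_inv_def by auto
  ultimately obtain \<pi> where \<pi>: "is_perm \<pi>" "\<forall>z\<in>P. \<pi> (fst z) = snd z"
    "\<forall>a\<in>{..<m} - fst ` P. \<pi> a = (\<mu>(x := y)) a"
    using is_perm_extend by blast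
  have "(i, \<pi> i) \<notin> F" if "i < m" for i
  proof (cases "i \<in> fst ` P")
    case True
    then obtain z where "z \<in> P" "i = fst z"
      by blast
    then have "(i, \<pi> i) \<in> P"
      using \<pi>(2) by simp
    then show ?thesis
      using P(3) by blast
  next
    case False
    then show ?thesis
      using \<pi>(3) \<mu>(2) xy(5) that unfolding R_def by (cases "i = x") auto
  qed
  then show ?thesis
    using that \<pi> xy by simp
qed

lemma consistent_exists:
  assumes inv: "cell_inv F P q" and Q: "Q \<subseteq> cells" "card Q \<le> q"
    and room: "card P + 1 + 2 * load_cap \<le> m" "2 * q < (m - card P)\<^sup>2"
  shows "\<exists>\<pi> a. consistent F P Q \<pi> a"
proof -
  define U where "U = {..<m} - fst ` P"
  define V where "V = {..<m} - snd ` P"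
  have "card (F \<union> Q) \<le> card F + card Q"
    by (rule card_Un_le)
  also have "\<dots> < card (U \<times> V)"
    using inv Q(2) room(2) card_uncommitted[of P] unfolding cell_inv_def U_def V_def
    by (simp add: card_cartesian_product power2_eq_square)
  finally have "\<not> U \<times> V \<subseteq> F \<union> Q"
    using cell_inv_finite[OF inv] finite_subset[OF Q(1) finite_cells] by (meson card_mono finite_UnI not_le)
  then obtain x y where "x \<in> U" "y \<in> V" "(x, y) \<notin> F" "(x, y) \<notin> Q"
    by auto
  moreover from this obtain \<pi> where "is_perm \<pi>" "\<forall>i<m. (i, \<pi> i) \<notin> F" "\<forall>z\<in>P. \<pi> (fst z) = snd z" "\<pi> x = y"
    using avoiding_perm_exists[OF inv room(1), of x y] unfolding U_def V_def by blast
  ultimately have "consistent F P Q \<pi> x"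
    unfolding consistent_def U_def by simp
  then show ?thesis
    by blast
qed


lemma leaf_room:
  assumes "cell_inv F P q" "128 * q < L\<^sup>2"
  shows "card P + 1 + 2 * load_cap \<le> m \<and> 2 * q < (m - card P)\<^sup>2"
proof -
  have "card P \<le> q" "card F \<le> q"
    using assms(1) unfolding cell_inv_def by simp_all
  moreover have "load_cap * card P \<le> 2 * card F"
    using committed_cells_bound[OF assms(1)] .
  ultimately show ?thesis
    using completion_room[OF one_le_m L_upper assms(2)] unfolding load_cap_def by simp
qed

lemma adversary:
  assumes "dt_vars t \<subseteq> pairs (k * L)" "adversary_inv F P Q q" "128 * (q + dt_depth t) < L\<^sup>2"
  shows "\<exists>\<pi> a. consistent F P Q \<pi> a \<and>
    dt_eval t (\<lambda>e. e \<in> lift \<pi> a (twist_ham a)) = dt_eval t (\<lambda>e. e \<in> lift \<pi> a (twist_union a))"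
  using assms
proof (induction t arbitrary: F P Q q)
  case (Leaf b)
  then have "cell_inv F P q" "Q \<subseteq> cells" "card Q \<le> q" "128 * q < L\<^sup>2"
    unfolding adversary_inv_def by simp_all
  then show ?case
    using consistent_exists leaf_room by fastforce
next
  case (Node i t0 t1)
  then obtain F' P' Q' b where step: "adversary_inv F' P' Q' (Suc q)"
    "\<forall>\<pi> a. consistent F' P' Q' \<pi> a \<longrightarrow> consistent F P Q \<pi> a"
    "\<forall>\<pi> a t. consistent F' P' Q' \<pi> a \<longrightarrow> (i \<in> lift \<pi> a t) = b"
    using edge_query_step[of F P Q q i] by auto
  define t' where "t' = (if b then t1 else t0)"
  have t': "dt_vars t' \<subseteq> pairs (k * L)" "128 * (Suc q + dt_depth t') < L\<^sup>2"
    using Node.prems(1,3) unfolding t'_def by auto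
  have "\<exists>\<pi> a. consistent F' P' Q' \<pi> a \<and>
    dt_eval t' (\<lambda>e. e \<in> lift \<pi> a (twist_ham a)) = dt_eval t' (\<lambda>e. e \<in> lift \<pi> a (twist_union a))"
  proof (cases b)
    case True
    then show ?thesis
      using Node.IH(2)[OF _ step(1)] t' unfolding t'_def by simp
  next
    case False
    then show ?thesis
      using Node.IH(1)[OF _ step(1)] t' unfolding t'_def by simp
  qed
  then obtain \<pi> a where \<pi>: "consistent F' P' Q' \<pi> a"
    "dt_eval t' (\<lambda>e. e \<in> lift \<pi> a (twist_ham a)) = dt_eval t' (\<lambda>e. e \<in> lift \<pi> a (twist_union a))"
    by blast
  moreover have "(i \<in> lift \<pi> a (twist_ham a)) = b" "(i \<in> lift \<pi> a (twist_union a)) = b"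
    using step(3) \<pi>(1) by blast+
  ultimately show ?case
    using step(2) unfolding t'_def by (intro exI[of _ \<pi>] exI[of _ a]) (cases b; simp)
qed

lemma depth_lower_bound:
  assumes "dt_vars t \<subseteq> pairs (k * L)"
    and "\<forall>x\<in>Delta_1vK (k * L) k \<inter> cube (pairs (k * L)). dt_eval t x = one_v_k_cycle (k * L) x"
  shows "L\<^sup>2 \<le> 128 * dt_depth t"
proof (rule ccontr)
  assume "\<not> L\<^sup>2 \<le> 128 * dt_depth t"
  moreover have "adversary_inv {} {} {} 0"
    unfolding adversary_inv_def cell_inv_def partial_bij_def row_load_def col_load_def by simp
  ultimately obtain \<pi> a where "consistent {} {} {} \<pi> a" and same:
    "dt_eval t (\<lambda>e. e \<in> lift \<pi> a (twist_ham a)) = dt_eval t (\<lambda>e. e \<in> lift \<pi> a (twist_union a))"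
    using adversary[OF assms(1)] by fastforce
  then have \<pi>: "is_perm \<pi>" "a < m"
    unfolding consistent_def by simp_all
  have "ham_cycle (k * L) (\<lambda>e. e \<in> lift \<pi> a (twist_ham a))"
    using ham_cycle_lift[OF \<pi>(1) voltage_sum_twist_ham[OF \<pi>(2)]] .
  moreover have union: "union_of_cycles (k * L) k L (\<lambda>e. e \<in> lift \<pi> a (twist_union a))"
    using union_of_cycles_lift[OF \<pi>(1) voltage_sum_twist_union[OF \<pi>(2)]] .
  moreover have "\<not> ham_cycle (k * L) (\<lambda>e. e \<in> lift \<pi> a (twist_union a))"
    using union_of_cycles_not_ham_cycle[OF two_le_k union] .
  ultimately show False
    using assms(2) same lift_in_cube[OF \<pi>(1)] k_pos
    unfolding Delta_1vK_def one_v_k_cycle_def by auto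
qed

end

theorem theorem4p5:
  fixes n k :: nat
  assumes "2 \<le> k" and "k dvd n" and "3 * k \<le> n"
  shows "real (Dpartial (pairs n) (Delta_1vK n k) (one_v_k_cycle n))
           \<ge> real n ^ 2 / (128 * real k ^ 2)"
proof -
  define L where "L = n div k"
  have n: "n = k * L"
    using assms(2) unfolding L_def by simp
  then have "3 \<le> L"
    using assms(1,3) by simp
  then interpret cyclic_cover k L "(L - 1) div 2"
    using assms(1) by unfold_locales auto
  obtain t where t: "dt_vars t \<subseteq> pairs n" "dt_depth t = Dpartial (pairs n) (Delta_1vK n k) (one_v_k_cycle n)"
    "\<forall>x\<in>Delta_1vK n k \<inter> cube (pairs n). dt_eval t x = one_v_k_cycle n x"
    using Dpartial_witness[OF finite_pairs] .
  have "L\<^sup>2 \<le> 128 * dt_depth t"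
    using depth_lower_bound t unfolding n by blast
  then have "real (L\<^sup>2) \<le> real (128 * dt_depth t)"
    by (rule of_nat_mono)
  then have "real L ^ 2 / 128 \<le> real (dt_depth t)"
    by simp
  moreover have "real n ^ 2 / (128 * real k ^ 2) = real L ^ 2 / 128"
    using assms(1) unfolding n by (simp add: field_simps power2_eq_square)
  ultimately show ?thesis
    using t(2) by simp
qed

end
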